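(* Consider $\min_x f(x)=\frac1n\sum_{i=1}^nf_i(x)$ where each $f_i$ is $\mu$-strongly convex, with unique minimizer $x^*$, run Algorithm BL2 (described in the context), and suppose the constants $H,H_1,M_1,M_2,R$ of the context satisfy the stated inequalities. (i) Suppose each $\mathcal{Q}_i^k$ is an unbiased compressor with parameter $\omega_{\rm M}$ and $0<\eta\le1/(\omega_{\rm M}+1)$; for all $i\in[n]$, $j\in[d]$, $k\ge0$, $(z_i^k)_j$ is a convex combination of $\{(x^t)_j\}_{t=0}^k$; and for all $i,j,l,k$, $(\mathbf{L}_i^k)_{jl}$ is a convex combination of $\{h^i(\nabla^2f_i(z_i^t))_{jl}\}_{t=0}^k$. If $\|x^0-x^*\|^2\le\tilde c_3:=\min\left\{\frac{\mu^2}{d^2(6H^2+24H_1^2)},\frac{\mu^2}{96d^4N_{\rm B}R^2M_2^2}\right\}$, then $\|z_i^k-x^*\|^2\le d\,\tilde c_3$ and $\mathcal{H}^k\le\frac{\mu^2}{96dN_{\rm B}R^2}$ for all $i\in[n]$ and $k\ge0$. (ii) Suppose each $\mathcal{Q}_i^k$ is a deterministic contraction compressor with parameter $\delta_{\rm M}$ and $\eta=1$, and each $\mathcal{C}_i^k$ is a deterministic contraction compressor with parameter $\delta$ and $\alpha=1$; set $(A_{\rm M},B_{\rm M}):=(\delta_{\rm M}/4,6/\delta_{\rm M}-7/2)$, $(A,B):=(\delta/4,6/\delta-7/2)$ and $\tilde c_4:=\min\left\{\frac{A_{\rm M}\mu^2}{B_{\rm M}(6H^2+24H_1^2)},\frac{AA_{\rm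 M}\mu^2}{96N_{\rm B}R^2B_{\rm M}BM_1^2}\right\}$. If $\|z_i^0-x^*\|^2\le\tilde c_4$ and $\|\mathbf{L}_i^0-\mathbf{L}_i^*\|_{\rm F}^2\le\frac{A_{\rm M}\mu^2}{96N_{\rm B}R^2B_{\rm M}}$ for all $i\in[n]$, then $\|z_i^k-x^*\|^2\le\tilde c_4$ and $\|\mathbf{L}_i^k-\mathbf{L}_i^*\|_{\rm F}^2\le\frac{A_{\rm M}\mu^2}{96N_{\rm B}R^2B_{\rm M}}$ for all $i\in[n]$ and $k\ge0$.
   Context: Compressors: a randomized map on $\mathbb{R}^{d\times d}$ (or $\mathbb{R}^d$) is unbiased with parameter $\omega\ge0$ if $\mathbb{E}\mathcal{C}(\mathbf{A})=\mathbf{A}$ and $\mathbb{E}\|\mathcal{C}(\mathbf{A})\|_{\rm F}^2\le(\omega+1)\|\mathbf{A}\|_{\rm F}^2$; a contraction compressor with parameter $\delta\in(0,1]$ if $\mathbb{E}\|\mathbf{A}-\mathcal{C}(\mathbf{A})\|_{\rm F}^2\le(1-\delta)\|\mathbf{A}\|_{\rm F}^2$; deterministic means a fixed non-random map. Bases: for each $i$, $\{\mathbf{B}_i^{jl}\}_{j,l\in[d]}$ is a basis of $\mathbb{R}^{d\times d}$ and $h^i(\mathbf{A})$ is the coefficient matrix with $\mathbf{A}=\sum_{j,l}h^i(\mathbf{A})_{jl}\mathbf{B}_i^{jl}$; $N_{\rm B}:=1$ if all these bases are Frobenius-orthogonal, else $d^2$. Standing assumptions: for all $x,y$, $i$: $\|\nabla^2f_i(x)-\nabla^2f_i(y)\|\le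 H\|x-y\|$ (spectral), $\|\nabla^2f_i(x)-\nabla^2f_i(y)\|_{\rm F}\le H_1\|x-y\|$, $\|h^i(\nabla^2f_i(x))-h^i(\nabla^2f_i(y))\|_{\rm F}\le M_1\|x-y\|$, $\max_{j,l}|h^i(\nabla^2f_i(x))_{jl}-h^i(\nabla^2f_i(y))_{jl}|\le M_2\|x-y\|$, $\max_{j,l}\|\mathbf{B}_i^{jl}\|_{\rm F}\le R$. $[\mathbf{A}]_s:=(\mathbf{A}+\mathbf{A}^\top)/2$. Algorithm BL2 (parameters $\alpha,\eta>0$, $p\in(0,1]$, $0<\tau\le n$): initialize $w_i^0=z_i^0=x^0$ and matrices $\mathbf{L}_i^0$; $\mathbf{H}_i^k:=\sum_{j,l}(\mathbf{L}_i^k)_{jl}\mathbf{B}_i^{jl}$, $l_i^k:=\|[\mathbf{H}_i^k]_s-\nabla^2f_i(z_i^k)\|_{\rm F}$, $g_i^k:=([\mathbf{H}_i^k]_s+l_i^k\mathbf{I})w_i^k-\nabla f_i(w_i^k)$, and $\mathbf{H}^k,l^k,g^k$ are their averages over $i$. At iteration $k$: $x^{k+1}=([\mathbf{H}^k]_s+l^k\mathbf{I})^{-1}g^k$; a random $S^k\subseteq[n]$ is drawn with $\mathbb{P}[i\in S^k]=\tau/n$. For $i\in S^k$: $z_i^{k+1}=z_i^k+\eta\mathcal{Q}_i^k(x^{k+1}-z_i^k)$, $\mathbf{L}_i^{k+1}=\mathbf{L}_i^k+\alpha\,\mathcal{C}_i^k(h^i(\nabla^2f_i(z_i^{k+1}))-\mathbf{L}_i^k)$,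 and with an independent $\xi_i^k\sim$ Bernoulli$(p)$, $w_i^{k+1}=z_i^{k+1}$ if $\xi_i^k=1$, $w_i^{k+1}=w_i^k$ otherwise. For $i\notin S^k$: $z_i^{k+1}=z_i^k$, $w_i^{k+1}=w_i^k$, $\mathbf{L}_i^{k+1}=\mathbf{L}_i^k$. $\mathbf{L}_i^*:=h^i(\nabla^2f_i(x^* ))$, $\mathcal{H}^k:=\frac1n\sum_i\|\mathbf{L}_i^k-\mathbf{L}_i^*\|_{\rm F}^2$. *)

theory Defs
  imports "HOL-Probability.Probability"
begin

definition strongly_convex :: "real \<Rightarrow> ('a::real_normed_vector \<Rightarrow> real) \<Rightarrow> bool" where
  "strongly_convex mu f \<longleftrightarrow>
     (\<forall>x y t. 0 \<le> t \<and> t \<le> 1 \<longrightarrow>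
        f (t *\<^sub>R x + (1 - t) *\<^sub>R y) \<le> t * f x + (1 - t) * f y - mu / 2 * t * (1 - t) * (norm (x - y))\<^sup>2)"

(* Hmat Bi L = sum_{j,l} L_{jl} B_i^{jl}; norm on real^'n^'n is the Frobenius norm *)
definition Hmat :: "('n::finite \<Rightarrow> 'n \<Rightarrow> real^'n^'n) \<Rightarrow> real^'n^'n \<Rightarrow> real^'n^'n" where
  "Hmat Bi L = (\<Sum>j\<in>UNIV. \<Sum>l\<in>UNIV. (L $ j $ l) *\<^sub>R Bi j l)"

definition is_basis_mat :: "('n::finite \<Rightarrow> 'n \<Rightarrow> real^'n^'n) \<Rightarrow> bool" where
  "is_basis_mat Bi \<longleftrightarrow> (\<forall>A. \<exists>!L. A = Hmat Bi L)"

definition hcoef :: "('n::finite \<Rightarrow> 'n \<Rightarrow> real^'n^'n) \<Rightarrow> real^'n^'n \<Rightarrow> real^'n^'n" where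
  "hcoef Bi A = (THE L. A = Hmat Bi L)"

definition symm :: "real^'n::finite^'n \<Rightarrow> real^'n^'n" where
  "symm A = (1/2) *\<^sub>R (A + transpose A)"

definition NB :: "nat \<Rightarrow> (nat \<Rightarrow> 'n::finite \<Rightarrow> 'n \<Rightarrow> real^'n^'n) \<Rightarrow> real" where
  "NB n B = (if (\<forall>i<n. \<forall>j l j' l'. (j, l) \<noteq> (j', l') \<longrightarrow> inner (B i j l) (B i j' l') = 0)
             then 1 else real (CARD('n) ^ 2))"

definition maxabs :: "real^'n::finite^'n \<Rightarrow> real" where
  "maxabs A = Max {\<bar>A $ j $ l\<bar> | j l. True}"

definition unbiased_compressor ::
  "'w measure \<Rightarrow> real \<Rightarrow> ('w \<Rightarrow> 'v::{banach,second_countable_topology} \<Rightarrow> 'v) \<Rightarrow> bool" where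
  "unbiased_compressor M om C \<longleftrightarrow> om \<ge> 0 \<and>
     (\<forall>A. integrable M (\<lambda>s. C s A) \<and> (\<integral>s. C s A \<partial>M) = A \<and>
          (\<integral>\<^sup>+ s. ennreal ((norm (C s A))\<^sup>2) \<partial>M) \<le> ennreal ((om + 1) * (norm A)\<^sup>2))"

definition contraction_compressor :: "real \<Rightarrow> ('v::real_normed_vector \<Rightarrow> 'v) \<Rightarrow> bool" where
  "contraction_compressor delta D \<longleftrightarrow> 0 < delta \<and> delta \<le> 1 \<and>
     (\<forall>A. (norm (A - D A))\<^sup>2 \<le> (1 - delta) * (norm A)\<^sup>2)"

definition det_contraction_compressor ::
  "'w measure \<Rightarrow> real \<Rightarrow> ('w \<Rightarrow> 'v::real_normed_vector \<Rightarrow> 'v) \<Rightarrow> bool" where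
  "det_contraction_compressor M delta C \<longleftrightarrow>
     (\<exists>D. contraction_compressor delta D \<and> (\<forall>s\<in>space M. C s = D))"

definition bl2_xnext ::
  "nat \<Rightarrow> (nat \<Rightarrow> real^'n \<Rightarrow> real^'n) \<Rightarrow> (nat \<Rightarrow> real^'n \<Rightarrow> real^'n^'n) \<Rightarrow>
   (nat \<Rightarrow> 'n::finite \<Rightarrow> 'n \<Rightarrow> real^'n^'n) \<Rightarrow>
   (nat \<Rightarrow> real^'n) \<Rightarrow> (nat \<Rightarrow> real^'n) \<Rightarrow> (nat \<Rightarrow> real^'n^'n) \<Rightarrow> real^'n" where
  "bl2_xnext n g Hs B z w L =
     (let Hi = (\<lambda>i. Hmat (B i) (L i));
          li = (\<lambda>i. norm (symm (Hi i) - Hs i (z i)));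
          gi = (\<lambda>i. (symm (Hi i) + li i *\<^sub>R mat 1) *v w i - g i (w i));
          Hav = (1 / real n) *\<^sub>R (\<Sum>i<n. Hi i);
          lav = (1 / real n) * (\<Sum>i<n. li i);
          gav = (1 / real n) *\<^sub>R (\<Sum>i<n. gi i)
      in matrix_inv (symm Hav + lav *\<^sub>R mat 1) *v gav)"

(* state (z^k, w^k, L^k); S k = S^k, xi k i = xi_i^k, Q i k = realized Q_i^k, C i k = realized C_i^k *)
primrec bl2_state ::
  "nat \<Rightarrow> (nat \<Rightarrow> real^'n \<Rightarrow> real^'n) \<Rightarrow> (nat \<Rightarrow> real^'n \<Rightarrow> real^'n^'n) \<Rightarrow>
   (nat \<Rightarrow> 'n::finite \<Rightarrow> 'n \<Rightarrow> real^'n^'n) \<Rightarrow> real \<Rightarrow> real \<Rightarrow>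
   (nat \<Rightarrow> nat set) \<Rightarrow> (nat \<Rightarrow> nat \<Rightarrow> bool) \<Rightarrow>
   (nat \<Rightarrow> nat \<Rightarrow> real^'n \<Rightarrow> real^'n) \<Rightarrow> (nat \<Rightarrow> nat \<Rightarrow> real^'n^'n \<Rightarrow> real^'n^'n) \<Rightarrow>
   real^'n \<Rightarrow> (nat \<Rightarrow> real^'n^'n) \<Rightarrow> nat \<Rightarrow>
   (nat \<Rightarrow> real^'n) \<times> (nat \<Rightarrow> real^'n) \<times> (nat \<Rightarrow> real^'n^'n)" where
  "bl2_state n g Hs B alpha eta S xi Q C x0 L0 0 = ((\<lambda>i. x0), (\<lambda>i. x0), L0)"
| "bl2_state n g Hs B alpha eta S xi Q C x0 L0 (Suc k) =
     (case bl2_state n g Hs B alpha eta S xi Q C x0 L0 k of (z, w, L) \<Rightarrow>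
       (let x' = bl2_xnext n g Hs B z w L;
            z' = (\<lambda>i. if i \<in> S k then z i + eta *\<^sub>R Q i k (x' - z i) else z i);
            L' = (\<lambda>i. if i \<in> S k then L i + alpha *\<^sub>R C i k (hcoef (B i) (Hs i (z' i)) - L i) else L i);
            w' = (\<lambda>i. if i \<in> S k \<and> xi k i then z' i else w i)
        in (z', w', L')))"

definition bl2_z where
  "bl2_z n g Hs B alpha eta S xi Q C x0 L0 k = fst (bl2_state n g Hs B alpha eta S xi Q C x0 L0 k)"
definition bl2_L where
  "bl2_L n g Hs B alpha eta S xi Q C x0 L0 k = snd (snd (bl2_state n g Hs B alpha eta S xi Q C x0 L0 k))"

fun bl2_x where
  "bl2_x n g Hs B alpha eta S xi Q C x0 L0 0 = x0"
| "bl2_x n g Hs B alpha eta S xi Q C x0 L0 (Suc k) =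
     (case bl2_state n g Hs B alpha eta S xi Q C x0 L0 k of (z, w, L) \<Rightarrow> bl2_xnext n g Hs B z w L)"

end

theory Submission
  imports Defs
begin

(*
  Once the random choices are fixed the iteration is deterministic, so both parts are proved for
  an arbitrary realization, by induction on k. Write xs for the minimizer and Ls_i for the
  coefficients of the Hessian of f_i at xs.

  With M_i = [H_i]_s + l_i I, the shift l_i makes M_i
  mu-coercive, because the true Hessian at z_i is; and since the gradients of the f_i sum to zero
  at xs, the new point x' satisfies
    (1/n) sum_i M_i (x' - xs) = (1/n) sum_i (M_i (w_i - xs) - (grad f_i(w_i) - grad f_i(xs))).
  Each summand is at most (H |w_i - xs| + 2 sqrt(N_B) R |L_i - Ls_i| + H_1 |z_i - xs|) |w_i - xs|,
  by the Lipschitz continuity of the Hessians and the symmetry of the Hessian at xs. Hence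
  |x' - xs|^2 <= (3 (H^2 + H_1^2) rho + 12 N_B R^2 sigma) rho / mu^2 as soon as all w_i, z_i lie
  in the ball of radius sqrt rho around xs and all L_i in the ball of radius sqrt sigma around Ls_i.

  In case (i) the convex-hull hypotheses turn a ball around xs containing all past x^t into
  coordinatewise bounds on z_i and L_i, which close the induction. In case (ii) a contraction
  compressor with parameter delta satisfies
    |v + C(u - v)|^2 <= (1 - delta/4) |v|^2 + (6/delta - 7/2) |u|^2,
  and the constants are chosen exactly so that both balls are invariant.
*)

section \<open>Matrix and vector estimates\<close>

lemma norm_matrix_vector_mult_le:
  fixes A :: "real^'n::finite^'m::finite"
  shows "norm (A *v x) \<le> norm A * norm x"
proof -
  have row: "\<bar>(A *v x) $ j\<bar> \<le> norm (A $ j) * norm x" for j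
  proof -
    have "(A *v x) $ j = A $ j \<bullet> x"
      by (simp add: matrix_vector_mult_def inner_vec_def)
    then show ?thesis using Cauchy_Schwarz_ineq2 by simp
  qed
  have "(norm (A *v x))\<^sup>2 = (\<Sum>j\<in>UNIV. ((A *v x) $ j)\<^sup>2)"
    unfolding power2_norm_eq_inner inner_vec_def by (simp add: power2_eq_square)
  also have "\<dots> \<le> (\<Sum>j\<in>UNIV. (norm (A $ j) * norm x)\<^sup>2)"
    using row by (intro sum_mono) (metis abs_ge_zero power2_abs power_mono)
  also have "\<dots> = (norm A * norm x)\<^sup>2"
    by (simp add: power_mult_distrib sum_distrib_right[symmetric] power2_norm_eq_inner inner_vec_def)
  finally show ?thesis
    by (meson mult_nonneg_nonneg norm_ge_zero power2_le_imp_le)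
qed

lemma norm_matrix_vector_mult_le_onorm:
  fixes A :: "real^'n::finite^'m::finite"
  assumes "onorm (\<lambda>v. A *v v) \<le> c"
  shows "norm (A *v w) \<le> c * norm w"
proof -
  have "norm (A *v w) \<le> onorm (\<lambda>v. A *v v) * norm w" by (rule onorm) simp
  also have "\<dots> \<le> c * norm w" using assms by (simp add: mult_right_mono)
  finally show ?thesis .
qed

lemma inner_matrix_vector_ge:
  fixes A :: "real^'n::finite^'n"
  shows "- (norm A * (norm v)\<^sup>2) \<le> v \<bullet> (A *v v)"
proof -
  have "\<bar>v \<bullet> (A *v v)\<bar> \<le> norm v * norm (A *v v)" by (rule Cauchy_Schwarz_ineq2)
  also have "\<dots> \<le> norm v * (norm A * norm v)"
    by (simp add: norm_matrix_vector_mult_le mult_left_mono)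
  finally show ?thesis by (simp add: power2_eq_square algebra_simps)
qed

lemma sum_matrix_vector_mult: "(\<Sum>i\<in>I. A i) *v v = (\<Sum>i\<in>I. A i *v (v::real^'n::finite))"
  by (induction I rule: infinite_finite_induct) (auto simp: matrix_vector_mult_add_rdistrib)

lemma norm_transpose: "norm (transpose (A::real^'n::finite^'m::finite)) = norm A"
proof -
  have "(norm (transpose A))\<^sup>2 = (norm A)\<^sup>2"
    unfolding power2_norm_eq_inner inner_vec_def transpose_def by (simp, rule sum.swap)
  then show ?thesis by simp
qed

lemma norm_symm_le: "norm (symm A) \<le> norm A"
proof -
  have "norm (symm A) = norm (A + transpose A) / 2" by (simp add: symm_def)
  also have "\<dots> \<le> (norm A + norm (transpose A)) / 2"
    by (simp add: norm_triangle_ineq)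
  finally show ?thesis by (simp add: norm_transpose)
qed

lemma symm_diff: "symm (A - B) = symm A - symm B"
  by (simp add: symm_def transpose_def algebra_simps vec_eq_iff)

lemma symm_eq_self: "transpose A = A \<Longrightarrow> symm A = A"
  by (simp add: symm_def scaleR_2[symmetric])

lemma transpose_sum: "transpose (\<Sum>i\<in>I. A i) = (\<Sum>i\<in>I. transpose (A i))"
  by (induction I rule: infinite_finite_induct) (auto simp: transpose_def vec_eq_iff)

lemma symm_scaleR_sum: "symm (c *\<^sub>R (\<Sum>i\<in>I. A i)) = c *\<^sub>R (\<Sum>i\<in>I. symm (A i))"
  by (simp add: symm_def transpose_scalar transpose_sum scaleR_sum_right sum.distrib
      scaleR_add_right)

lemma norm_sq_matrix: "(norm (A::real^'n::finite^'m::finite))\<^sup>2 = (\<Sum>j\<in>UNIV. \<Sum>l\<in>UNIV. (A $ j $ l)\<^sup>2)"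
  unfolding power2_norm_eq_inner inner_vec_def by (simp add: power2_eq_square)

lemma sum_pairs: "(\<Sum>j\<in>UNIV. \<Sum>l\<in>UNIV. F j l) = (\<Sum>p\<in>UNIV. F (fst p) (snd p))"
  by (simp add: sum.cartesian_product split_def flip: UNIV_Times_UNIV)

lemma norm_sq_le_of_components_le:
  fixes x :: "real^'n::finite"
  assumes "\<And>j. \<bar>x $ j\<bar> \<le> r"
  shows "(norm x)\<^sup>2 \<le> real CARD('n) * r\<^sup>2"
proof -
  have "(norm x)\<^sup>2 = (\<Sum>j\<in>UNIV. (x $ j)\<^sup>2)"
    unfolding power2_norm_eq_inner inner_vec_def by (simp add: power2_eq_square)
  also have "\<dots> \<le> (\<Sum>j\<in>(UNIV::'n set). r\<^sup>2)"
    using assms by (intro sum_mono) (metis abs_ge_zero power2_abs power_mono)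
  finally show ?thesis by simp
qed

lemma norm_sq_le_of_entries_le:
  fixes A :: "real^'n::finite^'m::finite"
  assumes "\<And>j l. \<bar>A $ j $ l\<bar> \<le> r"
  shows "(norm A)\<^sup>2 \<le> real CARD('m) * real CARD('n) * r\<^sup>2"
proof -
  have "(norm A)\<^sup>2 = (\<Sum>j\<in>UNIV. (norm (A $ j))\<^sup>2)"
    unfolding power2_norm_eq_inner inner_vec_def ..
  also have "\<dots> \<le> (\<Sum>j\<in>(UNIV::'m set). real CARD('n) * r\<^sup>2)"
    by (intro sum_mono norm_sq_le_of_components_le assms)
  finally show ?thesis by simp
qed

lemma maxabs_ge: "\<bar>A $ j $ l\<bar> \<le> maxabs A"
  unfolding maxabs_def
proof (rule Max_ge)
  have "{\<bar>A $ j $ l\<bar> |j l. True} = (\<lambda>(j, l). \<bar>A $ j $ l\<bar>) ` UNIV" by auto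
  then show "finite {\<bar>A $ j $ l\<bar> |j l. True}" by simp
qed auto

lemma convex_hull_abs_diff_le:
  fixes u c r :: real
  assumes "u \<in> convex hull (h ` T)" and "\<And>t. t \<in> T \<Longrightarrow> \<bar>h t - c\<bar> \<le> r"
  shows "\<bar>u - c\<bar> \<le> r"
proof -
  have "convex hull (h ` T) \<subseteq> cball c r"
    using assms(2) by (intro hull_minimal) (auto simp: convex_cball dist_real_def abs_minus_commute)
  then show ?thesis using assms(1) by (auto simp: dist_real_def abs_minus_commute)
qed

lemma norm_sq_le_of_components_in_hull:
  fixes x x0 :: "real^'n::finite" and p :: "'a \<Rightarrow> real^'n"
  assumes hull: "\<And>j. x $ j \<in> convex hull ((\<lambda>t. p t $ j) ` T)"
    and near: "\<And>t. t \<in> T \<Longrightarrow> norm (p t - x0) \<le> r"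
  shows "(norm (x - x0))\<^sup>2 \<le> real CARD('n) * r\<^sup>2"
proof (rule norm_sq_le_of_components_le)
  fix j
  have "\<bar>x $ j - x0 $ j\<bar> \<le> r"
    using hull by (rule convex_hull_abs_diff_le)
      (metis near component_le_norm_cart order_trans vector_minus_component)
  then show "\<bar>(x - x0) $ j\<bar> \<le> r" by simp
qed

lemma norm_sq_le_of_entries_in_hull:
  fixes A A0 :: "real^'n::finite^'n" and P :: "'a \<Rightarrow> real^'n^'n"
  assumes hull: "\<And>j l. A $ j $ l \<in> convex hull ((\<lambda>t. P t $ j $ l) ` T)"
    and near: "\<And>t. t \<in> T \<Longrightarrow> maxabs (P t - A0) \<le> r"
  shows "(norm (A - A0))\<^sup>2 \<le> real CARD('n) * real CARD('n) * r\<^sup>2"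
proof (rule norm_sq_le_of_entries_le)
  fix j l
  have "\<bar>A $ j $ l - A0 $ j $ l\<bar> \<le> r"
    using hull by (rule convex_hull_abs_diff_le)
      (metis near maxabs_ge order_trans vector_minus_component)
  then show "\<bar>(A - A0) $ j $ l\<bar> \<le> r" by simp
qed

lemma coercive_matrix_norm_ge:
  fixes A :: "real^'n::finite^'n"
  assumes "\<And>v. mu * (norm v)\<^sup>2 \<le> v \<bullet> (A *v v)"
  shows "mu * norm v \<le> norm (A *v v)"
proof (cases "v = 0")
  case False
  have "mu * (norm v)\<^sup>2 \<le> norm v * norm (A *v v)"
    using assms[of v] norm_cauchy_schwarz[of v "A *v v"] by linarith
  then show ?thesis using False by (simp add: power2_eq_square)
qed simp

lemma coercive_matrix_inv_cancel:
  fixes A :: "real^'n::finite^'n"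
  assumes mu: "0 < mu" and coercive: "\<And>v. mu * (norm v)\<^sup>2 \<le> v \<bullet> (A *v v)"
  shows "A *v (matrix_inv A *v y) = y"
proof -
  have "inj ((*v) A)"
  proof (rule injI)
    fix a b
    assume "A *v a = A *v b"
    then have "mu * norm (a - b) \<le> 0"
      using coercive_matrix_norm_ge[OF coercive, of "a - b"]
      by (simp add: matrix_vector_mult_diff_distrib)
    then show "a = b" using mu by (simp add: mult_le_0_iff)
  qed
  then have "invertible A"
    using matrix_left_invertible_injective invertible_left_inverse by blast
  then have "A ** matrix_inv A = mat 1"
    unfolding invertible_def matrix_inv_def by (rule someI_ex[THEN conjunct1])
  then show ?thesis by (simp add: matrix_vector_mul_assoc)
qed

lemma averaged_newton_step_error:
  fixes M :: "nat \<Rightarrow> real^'n::finite^'n" and G :: "nat \<Rightarrow> real^'n \<Rightarrow> real^'n" and w :: "nat \<Rightarrow> real^'n"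
  assumes n: "n \<ge> 1" and mu: "0 < mu"
    and coercive: "\<And>i v. i < n \<Longrightarrow> mu * (norm v)\<^sup>2 \<le> v \<bullet> (M i *v v)"
    and critical: "(\<Sum>i<n. G i xs) = 0"
  shows "mu * norm (matrix_inv ((1 / real n) *\<^sub>R (\<Sum>i<n. M i)) *v
              ((1 / real n) *\<^sub>R (\<Sum>i<n. M i *v w i - G i (w i))) - xs)
         \<le> (1 / real n) * (\<Sum>i<n. norm (M i *v (w i - xs) - (G i (w i) - G i xs)))"
    (is "mu * norm (?x - xs) \<le> _")
proof -
  define A where "A = (1 / real n) *\<^sub>R (\<Sum>i<n. M i)"
  have A_apply: "A *v v = (1 / real n) *\<^sub>R (\<Sum>i<n. M i *v v)" for v
    by (simp add: A_def sum_matrix_vector_mult scaleR_matrix_vector_assoc[symmetric])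
  have A_coercive: "mu * (norm v)\<^sup>2 \<le> v \<bullet> (A *v v)" for v
  proof -
    have "real n * (mu * (norm v)\<^sup>2) \<le> (\<Sum>i<n. v \<bullet> (M i *v v))"
      using sum_mono[of "{..<n}" "\<lambda>_. mu * (norm v)\<^sup>2"] coercive by simp
    then show ?thesis using n by (simp add: A_apply inner_sum_right field_simps)
  qed
  have "A *v (?x - xs) = (1 / real n) *\<^sub>R (\<Sum>i<n. M i *v w i - G i (w i)) - A *v xs"
    unfolding A_def[symmetric]
    by (simp add: matrix_vector_mult_diff_distrib coercive_matrix_inv_cancel[OF mu A_coercive])
  also have "\<dots> = (1 / real n) *\<^sub>R (\<Sum>i<n. M i *v (w i - xs) - (G i (w i) - G i xs))"
    by (simp add: A_apply critical sum_subtractf matrix_vector_mult_diff_distrib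
        flip: scaleR_diff_right)
  finally have "mu * norm (?x - xs)
      \<le> norm ((1 / real n) *\<^sub>R (\<Sum>i<n. M i *v (w i - xs) - (G i (w i) - G i xs)))"
    using coercive_matrix_norm_ge[OF A_coercive, of "?x - xs"] by simp
  also have "\<dots> \<le> (1 / real n) * (\<Sum>i<n. norm (M i *v (w i - xs) - (G i (w i) - G i xs)))"
    by (simp add: divide_right_mono norm_sum)
  finally show ?thesis .
qed

section \<open>Elementary real inequalities\<close>

lemma le_of_le_add_small_multiple:
  fixes a b K :: real
  assumes "\<And>t. 0 < t \<Longrightarrow> t < 1 \<Longrightarrow> a \<le> b + t * K"
  shows "a \<le> b"
proof (rule field_le_epsilon)
  fix e :: real
  assume "0 < e"
  define t where "t = min (1/2) (e / (\<bar>K\<bar> + 1))"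
  have t: "0 < t" "t < 1" using \<open>0 < e\<close> by (auto simp: t_def)
  have "t * K \<le> t * (\<bar>K\<bar> + 1)" using t by (intro mult_left_mono) auto
  also have "\<dots> \<le> e / (\<bar>K\<bar> + 1) * (\<bar>K\<bar> + 1)"
    by (intro mult_right_mono) (auto simp: t_def)
  finally have "t * K \<le> e" by simp
  then show "a \<le> b + e" using assms[OF t] by linarith
qed

lemma square_sum3_le: "((a::real) + b + c)\<^sup>2 \<le> 3 * (a\<^sup>2 + b\<^sup>2 + c\<^sup>2)"
proof -
  have "0 \<le> (a - b)\<^sup>2 + (a - c)\<^sup>2 + (b - c)\<^sup>2" by simp
  then show ?thesis by (simp add: power2_eq_square algebra_simps)
qed

lemma mult_le_of_le_divide:
  fixes c N D :: real
  assumes "c \<le> N / D" and "0 \<le> D" and "0 \<le> N"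
  shows "c * D \<le> N"
  using assms by (cases "D = 0") (simp_all add: pos_le_divide_eq)

section \<open>Functions with a Lipschitz Hessian\<close>

lemma hessian_lipschitz_nonneg:
  fixes Hs :: "real^'n::finite \<Rightarrow> real^'n^'n"
  assumes "\<And>x y. onorm (\<lambda>v. (Hs x - Hs y) *v v) \<le> H * norm (x - y)"
  shows "0 \<le> H"
proof -
  have "0 \<le> H * norm (0 - (1::real^'n))"
    using assms[of 0 1] onorm_pos_le[of "\<lambda>v. (Hs 0 - Hs 1) *v v"] by simp
  moreover have "0 < norm (0 - (1::real^'n))" by simp
  ultimately show ?thesis by (simp add: zero_le_mult_iff)
qed

lemma gradient_taylor_le:
  fixes g :: "real^'n::finite \<Rightarrow> real^'n" and Hs :: "real^'n \<Rightarrow> real^'n^'n"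
  assumes der: "\<And>x. (g has_derivative (\<lambda>h. Hs x *v h)) (at x)"
    and lip: "\<And>x y. onorm (\<lambda>v. (Hs x - Hs y) *v v) \<le> H * norm (x - y)"
  shows "norm (g w - g x - Hs x *v (w - x)) \<le> H * (norm (w - x))\<^sup>2"
proof -
  let ?S = "closed_segment x w"
  have "((\<lambda>y. g y - Hs x *v y) has_derivative (\<lambda>h. (Hs y - Hs x) *v h)) (at y within ?S)" for y
  proof -
    have "((\<lambda>y. g y - Hs x *v y) has_derivative (\<lambda>h. Hs y *v h - Hs x *v h)) (at y)"
      by (intro derivative_intros der bounded_linear_imp_has_derivative) simp
    then show ?thesis
      by (simp add: matrix_vector_mult_diff_rdistrib has_derivative_at_withinI)
  qed
  moreover have "onorm (\<lambda>h. (Hs y - Hs x) *v h) \<le> H * norm (w - x)" if "y \<in> ?S" for y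
  proof -
    have "H * norm (y - x) \<le> H * norm (w - x)"
      using segment_bound1[OF that] hessian_lipschitz_nonneg[OF lip] by (simp add: mult_left_mono)
    then show ?thesis using lip[of y x] by linarith
  qed
  ultimately have "norm ((g w - Hs x *v w) - (g x - Hs x *v x)) \<le> H * norm (w - x) * norm (w - x)"
    by (intro differentiable_bound[OF convex_closed_segment]) auto
  then show ?thesis by (simp add: matrix_vector_mult_diff_distrib power2_eq_square algebra_simps)
qed

lemma has_real_derivative_along_line:
  fixes f :: "real^'n::finite \<Rightarrow> real"
  assumes "\<And>x. (f has_derivative (\<lambda>h. g x \<bullet> h)) (at x)"
  shows "((\<lambda>s. f (p + s *\<^sub>R u)) has_real_derivative (g (p + s *\<^sub>R u) \<bullet> u)) (at s)"
proof -
  have "((\<lambda>s. p + s *\<^sub>R u) has_derivative (\<lambda>t. t *\<^sub>R u)) (at s)"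
    by (auto intro!: derivative_eq_intros)
  from has_derivative_compose[OF this assms]
  show ?thesis
    by (simp add: has_field_derivative_def inner_scaleR_right mult.commute[of _ "g (p + s *\<^sub>R u) \<bullet> u"])
qed

context
  fixes f :: "real^'n::finite \<Rightarrow> real" and g :: "real^'n \<Rightarrow> real^'n"
    and Hs :: "real^'n \<Rightarrow> real^'n^'n" and H :: real
  assumes grad: "\<And>x. (f has_derivative (\<lambda>h. g x \<bullet> h)) (at x)"
    and hess: "\<And>x. (g has_derivative (\<lambda>h. Hs x *v h)) (at x)"
    and lip: "\<And>x y. onorm (\<lambda>v. (Hs x - Hs y) *v v) \<le> H * norm (x - y)"
begin

lemma hessian_second_difference_le:
  assumes h: "0 < h"
  shows "\<bar>(f (x + h *\<^sub>R u + h *\<^sub>R v) - f (x + h *\<^sub>R u) - f (x + h *\<^sub>R v) + f x)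
           - h\<^sup>2 * ((Hs x *v v) \<bullet> u)\<bar>
         \<le> h ^ 3 * (norm u * H * ((norm v)\<^sup>2 + norm u * norm v))"
proof -
  define c where "c = (Hs x *v v) \<bullet> u"
  define F where "F s = f (x + h *\<^sub>R v + s *\<^sub>R u) - f (x + s *\<^sub>R u) - (h * c) * s" for s
  define F' where "F' s = g (x + h *\<^sub>R v + s *\<^sub>R u) \<bullet> u - g (x + s *\<^sub>R u) \<bullet> u - h * c" for s
  have "(F has_real_derivative F' s) (at s)" for s
    unfolding F_def F'_def
    by (intro DERIV_diff has_real_derivative_along_line[OF grad] DERIV_cmult_Id)
  then obtain z where z: "0 < z" "z < h" "F h - F 0 = h * F' z"
    using MVT2[OF h, of F F'] by auto
  let ?y = "x + z *\<^sub>R u"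
  have "F' z = (g (?y + h *\<^sub>R v) - g ?y - Hs ?y *v (h *\<^sub>R v)) \<bullet> u + ((Hs ?y - Hs x) *v (h *\<^sub>R v)) \<bullet> u"
    by (simp add: F'_def c_def algebra_simps inner_diff_left inner_add_left
          matrix_vector_mult_diff_rdistrib scaleR_matrix_vector_assoc[symmetric])
  then have "\<bar>F' z\<bar> \<le> norm (g (?y + h *\<^sub>R v) - g ?y - Hs ?y *v (h *\<^sub>R v)) * norm u
      + norm ((Hs ?y - Hs x) *v (h *\<^sub>R v)) * norm u"
    by (smt (verit) Cauchy_Schwarz_ineq2 inner_commute norm_mult)
  also have "\<dots> \<le> (H * (norm (h *\<^sub>R v))\<^sup>2) * norm u + (H * norm (z *\<^sub>R u) * norm (h *\<^sub>R v)) * norm u"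
    using gradient_taylor_le[OF hess lip, of "?y + h *\<^sub>R v" ?y]
      norm_matrix_vector_mult_le_onorm[OF lip[of ?y x], of "h *\<^sub>R v"]
    by (intro add_mono mult_right_mono) auto
  also have "\<dots> \<le> h\<^sup>2 * (norm u * H * ((norm v)\<^sup>2 + norm u * norm v))"
  proof -
    have "H * norm (z *\<^sub>R u) * norm (h *\<^sub>R v) * norm u \<le> H * (h * norm u) * norm (h *\<^sub>R v) * norm u"
      using z hessian_lipschitz_nonneg[OF lip]
      by (intro mult_right_mono mult_left_mono) (auto intro: mult_right_mono)
    then show ?thesis using h by (simp add: power2_eq_square algebra_simps)
  qed
  finally have bound: "h * \<bar>F' z\<bar> \<le> h * (h\<^sup>2 * (norm u * H * ((norm v)\<^sup>2 + norm u * norm v)))"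
    using h by (simp add: mult_left_mono)
  have "\<bar>F h - F 0\<bar> = h * \<bar>F' z\<bar>" using z h by (simp add: abs_mult)
  moreover have "F h - F 0 = (f (x + h *\<^sub>R u + h *\<^sub>R v) - f (x + h *\<^sub>R u) - f (x + h *\<^sub>R v) + f x) - h\<^sup>2 * c"
    by (simp add: F_def algebra_simps power2_eq_square)
  ultimately show ?thesis
    using bound by (simp add: c_def power3_eq_cube power2_eq_square mult.assoc)
qed

lemma hessian_symmetric:
  shows "transpose (Hs x) = Hs x"
proof -
  have key: "(Hs x *v v) \<bullet> u = (Hs x *v u) \<bullet> v" for u v
  proof -
    define K where
      "K = norm u * H * ((norm v)\<^sup>2 + norm u * norm v) + norm v * H * ((norm u)\<^sup>2 + norm v * norm u)"
    have "\<bar>(Hs x *v v) \<bullet> u - (Hs x *v u) \<bullet> v\<bar> \<le> 0 + t * K" if t: "0 < t" "t < 1" for t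
    proof -
      let ?D = "f (x + t *\<^sub>R u + t *\<^sub>R v) - f (x + t *\<^sub>R u) - f (x + t *\<^sub>R v) + f x"
      have "\<bar>?D - t\<^sup>2 * ((Hs x *v v) \<bullet> u)\<bar> \<le> t ^ 3 * (norm u * H * ((norm v)\<^sup>2 + norm u * norm v))"
        by (rule hessian_second_difference_le[OF t(1)])
      moreover have "\<bar>?D - t\<^sup>2 * ((Hs x *v u) \<bullet> v)\<bar> \<le> t ^ 3 * (norm v * H * ((norm u)\<^sup>2 + norm v * norm u))"
        using hessian_second_difference_le[OF t(1), where u=v and v=u]
        by (simp add: algebra_simps)
      ultimately have "\<bar>t\<^sup>2 * ((Hs x *v v) \<bullet> u) - t\<^sup>2 * ((Hs x *v u) \<bullet> v)\<bar> \<le> t ^ 3 * K"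
        unfolding K_def distrib_left by linarith
      moreover have "\<bar>t\<^sup>2 * ((Hs x *v v) \<bullet> u) - t\<^sup>2 * ((Hs x *v u) \<bullet> v)\<bar>
          = t\<^sup>2 * \<bar>(Hs x *v v) \<bullet> u - (Hs x *v u) \<bullet> v\<bar>"
        by (simp add: abs_mult flip: right_diff_distrib)
      ultimately have "t\<^sup>2 * \<bar>(Hs x *v v) \<bullet> u - (Hs x *v u) \<bullet> v\<bar> \<le> t\<^sup>2 * (t * K)"
        by (simp add: power2_eq_square power3_eq_cube mult.assoc)
      then show ?thesis using t by simp
    qed
    then have "\<bar>(Hs x *v v) \<bullet> u - (Hs x *v u) \<bullet> v\<bar> \<le> 0" by (rule le_of_le_add_small_multiple)
    then show ?thesis by simp
  qed
  have "Hs x $ l $ j = Hs x $ j $ l" for j l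
    using key[of "axis l 1" "axis j 1"]
    by (simp add: matrix_vector_mult_basis cart_eq_inner_axis[symmetric] column_def)
  then show ?thesis by (simp add: vec_eq_iff transpose_def)
qed

lemma first_order_remainder_le:
  shows "\<bar>f y - f x - g x \<bullet> (y - x)\<bar> \<le> (norm (Hs x) + H * norm (y - x)) * (norm (y - x))\<^sup>2"
proof -
  let ?S = "closed_segment x y" and ?C = "norm (Hs x) + H * norm (y - x)"
  have "((\<lambda>z. f z - g x \<bullet> z) has_derivative (\<lambda>h. (g z - g x) \<bullet> h)) (at z within ?S)" for z
  proof -
    have "((\<lambda>z. f z - g x \<bullet> z) has_derivative (\<lambda>h. g z \<bullet> h - g x \<bullet> h)) (at z)"
      by (intro derivative_intros grad)
    then show ?thesis by (simp add: inner_diff_left has_derivative_at_withinI)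
  qed
  moreover have "onorm (\<lambda>h. (g z - g x) \<bullet> h) \<le> ?C * norm (y - x)" if "z \<in> ?S" for z
  proof -
    have zx: "norm (z - x) \<le> norm (y - x)" using segment_bound1[OF that] .
    have "norm (g z - g x) \<le> norm (Hs x *v (z - x)) + norm (g z - g x - Hs x *v (z - x))"
      by (metis diff_add_cancel norm_triangle_ineq add.commute)
    also have "\<dots> \<le> norm (Hs x) * norm (z - x) + H * norm (z - x) * norm (z - x)"
      using gradient_taylor_le[OF hess lip, of z x]
      by (intro add_mono norm_matrix_vector_mult_le) (simp add: power2_eq_square)
    also have "\<dots> = (norm (Hs x) + H * norm (z - x)) * norm (z - x)" by (simp add: algebra_simps)
    also have "\<dots> \<le> ?C * norm (y - x)"
      using zx hessian_lipschitz_nonneg[OF lip]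
      by (intro mult_mono add_left_mono mult_left_mono) auto
    finally have "norm (g z - g x) \<le> ?C * norm (y - x)" .
    moreover have "onorm (\<lambda>h. (g z - g x) \<bullet> h) \<le> norm (g z - g x)"
      by (rule onorm_le) (simp add: Cauchy_Schwarz_ineq2)
    ultimately show ?thesis by linarith
  qed
  ultimately have "norm ((f y - g x \<bullet> y) - (f x - g x \<bullet> x)) \<le> ?C * norm (y - x) * norm (y - x)"
    by (intro differentiable_bound[OF convex_closed_segment]) auto
  then show ?thesis by (simp add: inner_diff_right power2_eq_square algebra_simps)
qed

lemma strongly_convex_gradient_ineq:
  assumes sc: "strongly_convex mu f"
  shows "f x + g x \<bullet> (y - x) + mu / 2 * (norm (y - x))\<^sup>2 \<le> f y"
proof -
  define d where "d = y - x"
  define K where "K = (norm (Hs x) + H * norm d) * (norm d)\<^sup>2"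
  have "g x \<bullet> d \<le> (f y - f x - mu / 2 * (norm d)\<^sup>2) + t * (mu / 2 * (norm d)\<^sup>2 + K)"
    if t: "0 < t" "t < 1" for t
  proof -
    have "H * norm (t *\<^sub>R d) \<le> H * norm d"
      using t hessian_lipschitz_nonneg[OF lip] by (intro mult_left_mono) (auto simp: mult_left_le_one_le)
    then have "(norm (Hs x) + H * norm (t *\<^sub>R d)) * (norm d)\<^sup>2 \<le> K"
      unfolding K_def by (intro mult_right_mono add_left_mono) auto
    then have "t\<^sup>2 * ((norm (Hs x) + H * norm (t *\<^sub>R d)) * (norm d)\<^sup>2) \<le> t\<^sup>2 * K"
      by (rule mult_left_mono) simp
    then have "(norm (Hs x) + H * norm (t *\<^sub>R d)) * (norm (t *\<^sub>R d))\<^sup>2 \<le> t\<^sup>2 * K"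
      by (simp add: power_mult_distrib mult_ac)
    then have "t * (g x \<bullet> d) \<le> f (x + t *\<^sub>R d) - f x + t\<^sup>2 * K"
      using first_order_remainder_le[of "x + t *\<^sub>R d" x] by (simp add: abs_le_iff)
    moreover have "f (t *\<^sub>R y + (1 - t) *\<^sub>R x) \<le> t * f y + (1 - t) * f x - mu / 2 * t * (1 - t) * (norm d)\<^sup>2"
      using sc t unfolding strongly_convex_def d_def by simp
    moreover have "t *\<^sub>R y + (1 - t) *\<^sub>R x = x + t *\<^sub>R d" by (simp add: d_def algebra_simps)
    ultimately have "t * (g x \<bullet> d) \<le> t * ((f y - f x - mu / 2 * (norm d)\<^sup>2) + t * (mu / 2 * (norm d)\<^sup>2 + K))"
      by (simp add: field_simps power2_eq_square)
    then show ?thesis using t by simp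
  qed
  then have "g x \<bullet> d \<le> f y - f x - mu / 2 * (norm d)\<^sup>2" by (rule le_of_le_add_small_multiple)
  then show ?thesis by (simp add: d_def)
qed

lemma strongly_convex_hessian_ge:
  assumes sc: "strongly_convex mu f"
  shows "mu * (norm v)\<^sup>2 \<le> v \<bullet> (Hs x *v v)"
proof -
  have monotone: "mu * (norm (y - x))\<^sup>2 \<le> (g y - g x) \<bullet> (y - x)" for x y
    using strongly_convex_gradient_ineq[OF sc, of x y]
      strongly_convex_gradient_ineq[OF sc, of y x]
    by (simp add: inner_diff_left inner_diff_right norm_minus_commute inner_commute algebra_simps)
  have "mu * (norm v)\<^sup>2 \<le> v \<bullet> (Hs x *v v) + t * (H * norm v ^ 3)" if t: "0 < t" "t < 1" for t
  proof -
    let ?r = "g (x + t *\<^sub>R v) - g x - Hs x *v (t *\<^sub>R v)"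
    have "mu * (t\<^sup>2 * (norm v)\<^sup>2) \<le> (g (x + t *\<^sub>R v) - g x) \<bullet> (t *\<^sub>R v)"
      using monotone[of "x + t *\<^sub>R v" x] t by (simp add: power_mult_distrib)
    also have "\<dots> = ?r \<bullet> (t *\<^sub>R v) + (Hs x *v (t *\<^sub>R v)) \<bullet> (t *\<^sub>R v)"
      by (simp add: inner_diff_left algebra_simps)
    also have "?r \<bullet> (t *\<^sub>R v) \<le> norm ?r * norm (t *\<^sub>R v)" by (rule norm_cauchy_schwarz)
    also have "norm ?r * norm (t *\<^sub>R v) \<le> H * (t * norm v)\<^sup>2 * (t * norm v)"
      using gradient_taylor_le[OF hess lip, of "x + t *\<^sub>R v" x] t hessian_lipschitz_nonneg[OF lip]
      by (intro mult_mono) auto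
    also have "(Hs x *v (t *\<^sub>R v)) \<bullet> (t *\<^sub>R v) = t\<^sup>2 * (v \<bullet> (Hs x *v v))"
      by (simp add: scaleR_matrix_vector_assoc[symmetric] matrix_vector_mult_scaleR inner_commute
          power2_eq_square)
    finally have "t\<^sup>2 * (mu * (norm v)\<^sup>2) \<le> t\<^sup>2 * (v \<bullet> (Hs x *v v) + t * (H * norm v ^ 3))"
      by (simp add: algebra_simps power2_eq_square power3_eq_cube)
    then show ?thesis using t by simp
  qed
  then show ?thesis by (rule le_of_le_add_small_multiple)
qed

end

lemma sum_gradients_eq_0_at_minimizer:
  fixes f :: "nat \<Rightarrow> real^'n::finite \<Rightarrow> real" and g :: "nat \<Rightarrow> real^'n \<Rightarrow> real^'n"
  assumes n: "n \<ge> 1"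
    and grad: "\<And>i x. i < n \<Longrightarrow> (f i has_derivative (\<lambda>h. g i x \<bullet> h)) (at x)"
    and min: "\<And>x. (1 / real n) * (\<Sum>i<n. f i xs) \<le> (1 / real n) * (\<Sum>i<n. f i x)"
  shows "(\<Sum>i<n. g i xs) = 0"
proof -
  have "((\<lambda>x. (1 / real n) * (\<Sum>i<n. f i x))
      has_derivative (\<lambda>h. (1 / real n) * (\<Sum>i<n. g i xs \<bullet> h))) (at xs)"
    by (intro derivative_intros grad) auto
  then have "(\<lambda>h. (1 / real n) * (\<Sum>i<n. g i xs \<bullet> h)) = (\<lambda>v. 0)"
    by (intro differential_zero_maxmin[OF _ open_UNIV]) (use min in auto)
  then have "(1 / real n) * (\<Sum>i<n. g i xs \<bullet> (\<Sum>i<n. g i xs)) = 0" by meson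
  then have "(\<Sum>i<n. g i xs) \<bullet> (\<Sum>i<n. g i xs) = 0" using n by (simp add: inner_sum_left)
  then show ?thesis by simp
qed

section \<open>Basis expansions of matrices\<close>

lemma Hmat_hcoef: "is_basis_mat Bi \<Longrightarrow> Hmat Bi (hcoef Bi A) = A"
  unfolding is_basis_mat_def hcoef_def by (metis (mono_tags, lifting) theI')

lemma Hmat_diff: "Hmat Bi L - Hmat Bi L' = Hmat Bi (L - L')"
  by (simp add: Hmat_def sum_subtractf[symmetric] scaleR_diff_left)

lemma norm_Hmat_le:
  fixes Bi :: "'n::finite \<Rightarrow> 'n \<Rightarrow> real^'n^'n"
  assumes R: "\<And>j l. norm (Bi j l) \<le> R"
  shows "(norm (Hmat Bi c))\<^sup>2 \<le> real (CARD('n) ^ 2) * R\<^sup>2 * (norm c)\<^sup>2"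
proof -
  have R0: "0 \<le> R" using R norm_ge_zero order_trans by blast
  define a :: "real^'n^'n" where "a = (\<chi> j l. \<bar>c $ j $ l\<bar>)"
  define one :: "real^'n^'n" where "one = (\<chi> j l. 1)"
  have "norm (Hmat Bi c) \<le> (\<Sum>j\<in>UNIV. \<Sum>l\<in>UNIV. norm ((c $ j $ l) *\<^sub>R Bi j l))"
    unfolding Hmat_def by (rule order_trans[OF norm_sum sum_mono[OF norm_sum]])
  also have "\<dots> \<le> (\<Sum>j\<in>UNIV. \<Sum>l\<in>UNIV. \<bar>c $ j $ l\<bar> * R)"
    by (intro sum_mono) (simp add: R mult_left_mono)
  also have "\<dots> = (a \<bullet> one) * R"
    by (simp add: a_def one_def inner_vec_def sum_distrib_right)
  also have "\<dots> \<le> norm a * norm one * R"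
    using R0 by (intro mult_right_mono norm_cauchy_schwarz) auto
  finally have "(norm (Hmat Bi c))\<^sup>2 \<le> (norm a * norm one * R)\<^sup>2"
    by (simp add: power_mono)
  also have "\<dots> = real (CARD('n) ^ 2) * R\<^sup>2 * (norm c)\<^sup>2"
  proof -
    have "(norm a)\<^sup>2 = (norm c)\<^sup>2" by (simp add: norm_sq_matrix a_def)
    moreover have "(norm one)\<^sup>2 = real (CARD('n) ^ 2)"
      unfolding norm_sq_matrix by (simp add: one_def power2_eq_square)
    ultimately show ?thesis by (simp add: power_mult_distrib)
  qed
  finally show ?thesis .
qed

lemma norm_Hmat_le_orthogonal:
  fixes Bi :: "'n::finite \<Rightarrow> 'n \<Rightarrow> real^'n^'n"
  assumes R: "\<And>j l. norm (Bi j l) \<le> R"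
    and orth: "\<And>j l j' l'. (j, l) \<noteq> (j', l') \<Longrightarrow> Bi j l \<bullet> Bi j' l' = 0"
  shows "(norm (Hmat Bi c))\<^sup>2 \<le> R\<^sup>2 * (norm c)\<^sup>2"
proof -
  define cc where "cc p = c $ fst p $ snd p" for p
  define BB where "BB p = Bi (fst p) (snd p)" for p
  have "(norm (Hmat Bi c))\<^sup>2 = (\<Sum>p\<in>UNIV. \<Sum>q\<in>UNIV. cc p * cc q * (BB q \<bullet> BB p))"
    unfolding Hmat_def sum_pairs power2_norm_eq_inner inner_sum_left inner_sum_right cc_def BB_def
    by (simp only: inner_scaleR_left inner_scaleR_right mult.assoc)
  also have "\<dots> = (\<Sum>p\<in>UNIV. (cc p)\<^sup>2 * (norm (BB p))\<^sup>2)"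
  proof (rule sum.cong[OF refl])
    fix p :: "'n \<times> 'n"
    have "(\<Sum>q\<in>UNIV. cc p * cc q * (BB q \<bullet> BB p))
        = (\<Sum>q\<in>UNIV. if q = p then cc p * cc q * (BB q \<bullet> BB p) else 0)"
      by (rule sum.cong[OF refl]) (auto simp: BB_def orth prod_eq_iff)
    then show "(\<Sum>q\<in>UNIV. cc p * cc q * (BB q \<bullet> BB p)) = (cc p)\<^sup>2 * (norm (BB p))\<^sup>2"
      by (simp add: power2_norm_eq_inner power2_eq_square[of "cc p"])
  qed
  also have "\<dots> \<le> (\<Sum>p\<in>UNIV. (cc p)\<^sup>2 * R\<^sup>2)"
    by (intro sum_mono mult_left_mono power_mono) (auto simp: BB_def R)
  also have "\<dots> = R\<^sup>2 * (norm c)\<^sup>2"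
    by (simp add: norm_sq_matrix sum_pairs cc_def sum_distrib_left mult.commute)
  finally show ?thesis .
qed

lemma norm_Hmat_le_NB:
  fixes B :: "nat \<Rightarrow> 'n::finite \<Rightarrow> 'n \<Rightarrow> real^'n^'n"
  assumes R: "\<And>i j l. i < n \<Longrightarrow> norm (B i j l) \<le> R" and i: "i < n"
  shows "(norm (Hmat (B i) c))\<^sup>2 \<le> NB n B * R\<^sup>2 * (norm c)\<^sup>2"
proof (cases "\<forall>i<n. \<forall>j l j' l'. (j, l) \<noteq> (j', l') \<longrightarrow> B i j l \<bullet> B i j' l' = 0")
  case True
  then show ?thesis using norm_Hmat_le_orthogonal[of "B i" R c] R i by (simp add: NB_def)
next
  case False
  then have "NB n B = real (CARD('n) ^ 2)" unfolding NB_def by (rule if_not_P)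
  then show ?thesis using norm_Hmat_le[of "B i" R c] R i by simp
qed

lemma NB_ge_1: "1 \<le> NB n B"
  by (simp add: NB_def)

lemma basis_norm_bound_pos:
  fixes Bi :: "'n::finite \<Rightarrow> 'n \<Rightarrow> real^'n^'n"
  assumes "is_basis_mat Bi" and "\<And>j l. norm (Bi j l) \<le> R"
  shows "0 < R"
proof (rule ccontr)
  assume "\<not> 0 < R"
  then have "norm (Bi j l) \<le> 0" for j l using assms(2)[of j l] by linarith
  then have "Bi j l = 0" for j l by simp
  then have "Hmat Bi L = 0" for L by (simp add: Hmat_def)
  moreover obtain L where "mat 1 = Hmat Bi L" using assms(1) unfolding is_basis_mat_def by blast
  ultimately have "(mat 1 :: real^'n^'n) $ j $ j = 0" for j by simp
  then show False by (simp add: mat_def)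
qed

section \<open>Contraction compressors\<close>

lemma contraction_constant_le:
  fixes d :: real
  assumes "0 < d" "d \<le> 1"
  shows "2 * (2 - d) * ((4 - d) / (3 * d)) \<le> 6 / d - 7 / 2"
proof -
  have "d * d \<le> d" using assms by (simp add: mult_left_le_one_le)
  moreover have "4 * (2 - d) * (4 - d) = 32 - 24 * d + 4 * (d * d)" by (simp add: algebra_simps)
  ultimately have "4 * (2 - d) * (4 - d) \<le> 36 - 21 * d" using assms by linarith
  then have "4 * (2 - d) * (4 - d) / (6 * d) \<le> (36 - 21 * d) / (6 * d)"
    using assms by (intro divide_right_mono) auto
  moreover have "2 * (2 - d) * ((4 - d) / (3 * d)) = 4 * (2 - d) * (4 - d) / (6 * d)"
    using assms by (simp add: field_simps)
  moreover have "6 / d - 7 / 2 = (36 - 21 * d) / (6 * d)" using assms by (simp add: field_simps)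
  ultimately show ?thesis by simp
qed

lemma contraction_step_real_bound:
  fixes a b s d :: real
  assumes d: "0 < d" "d \<le> 1" and s: "0 \<le> s" "s\<^sup>2 = 1 - d" and a: "0 \<le> a"
  shows "((1 + s) * a + s * b)\<^sup>2 \<le> (1 - d / 4) * b\<^sup>2 + (6 / d - 7 / 2) * a\<^sup>2"
proof -
  define P where "P = (1 + s) * a"
  \<comment> \<open>Young's inequality with the weight \<open>e\<close> for which \<open>e + (1 - d) = 1 - d / 4\<close>\<close>
  define e where "e = 3 * d / 4"
  have e0: "0 < e" using d by (simp add: e_def)
  have "2 * (s * P) * b * e \<le> e\<^sup>2 * b\<^sup>2 + (s * P)\<^sup>2"
    using zero_le_power2[of "e * b - s * P"] by (simp add: power2_diff algebra_simps)
  then have "2 * (s * P) * b \<le> e * b\<^sup>2 + (s * P)\<^sup>2 / e"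
    using e0 by (simp add: field_simps power2_eq_square)
  then have "((1 + s) * a + s * b)\<^sup>2 \<le> P\<^sup>2 + e * b\<^sup>2 + (s * P)\<^sup>2 / e + s\<^sup>2 * b\<^sup>2"
    unfolding P_def by (simp add: power2_eq_square algebra_simps)
  also have "\<dots> = P\<^sup>2 + e * b\<^sup>2 + (1 - d) * P\<^sup>2 / e + (1 - d) * b\<^sup>2"
    using s(2) by (simp add: power_mult_distrib)
  also have "\<dots> = (1 - d / 4) * b\<^sup>2 + P\<^sup>2 * ((4 - d) / (3 * d))"
    using d by (simp add: e_def field_simps)
  also have "P\<^sup>2 * ((4 - d) / (3 * d)) \<le> 2 * (2 - d) * a\<^sup>2 * ((4 - d) / (3 * d))"
  proof (rule mult_right_mono)
    have "(1 + s)\<^sup>2 \<le> 2 * (2 - d)"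
      using s zero_le_power2[of "1 - s"] by (simp add: power2_diff power2_sum)
    then show "P\<^sup>2 \<le> 2 * (2 - d) * a\<^sup>2" unfolding P_def power_mult_distrib by (simp add: mult_right_mono)
  qed (use d in simp)
  also have "2 * (2 - d) * a\<^sup>2 * ((4 - d) / (3 * d)) \<le> (6 / d - 7 / 2) * a\<^sup>2"
    using mult_right_mono[OF contraction_constant_le[OF d] zero_le_power2[of a]] by (simp only: ac_simps)
  finally show ?thesis by simp
qed

lemma contraction_compressor_step:
  fixes D :: "'v::real_normed_vector \<Rightarrow> 'v"
  assumes "contraction_compressor \<delta> D"
  shows "(norm (v + D (u - v)))\<^sup>2 \<le> (1 - \<delta> / 4) * (norm v)\<^sup>2 + (6 / \<delta> - 7 / 2) * (norm u)\<^sup>2"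
proof -
  have \<delta>: "0 < \<delta>" "\<delta> \<le> 1" and contr: "\<And>A. (norm (A - D A))\<^sup>2 \<le> (1 - \<delta>) * (norm A)\<^sup>2"
    using assms unfolding contraction_compressor_def by auto
  define s where "s = sqrt (1 - \<delta>)"
  have s: "0 \<le> s" "s\<^sup>2 = 1 - \<delta>" using \<delta> by (auto simp: s_def)
  let ?e = "u - v"
  have "(norm (?e - D ?e))\<^sup>2 \<le> (s * norm ?e)\<^sup>2"
    using contr[of ?e] s by (simp add: power_mult_distrib)
  then have "norm (?e - D ?e) \<le> s * norm (u - v)"
    using s by (meson mult_nonneg_nonneg norm_ge_zero power2_le_imp_le)
  moreover have "s * norm (u - v) \<le> s * (norm u + norm v)"
    using s(1) norm_triangle_ineq4[of u v] by (rule mult_left_mono[rotated])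
  moreover have "norm (v + D ?e) \<le> norm u + norm (?e - D ?e)"
    using norm_triangle_ineq4[of u "?e - D ?e"] by (simp add: algebra_simps)
  ultimately have "norm (v + D ?e) \<le> (1 + s) * norm u + s * norm v"
    by (simp add: algebra_simps)
  then have "(norm (v + D ?e))\<^sup>2 \<le> ((1 + s) * norm u + s * norm v)\<^sup>2"
    by (simp add: power_mono)
  also have "\<dots> \<le> (1 - \<delta> / 4) * (norm v)\<^sup>2 + (6 / \<delta> - 7 / 2) * (norm u)\<^sup>2"
    by (rule contraction_step_real_bound[OF \<delta> s]) simp
  finally show ?thesis .
qed

lemma contraction_compressor_step_le:
  fixes D :: "'v::real_normed_vector \<Rightarrow> 'v"
  assumes D: "contraction_compressor \<delta> D" and v: "(norm v)\<^sup>2 \<le> c"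
    and u: "(6 / \<delta> - 7 / 2) * (norm u)\<^sup>2 \<le> \<delta> / 4 * c"
  shows "(norm (v + D (u - v)))\<^sup>2 \<le> c"
proof -
  have "\<delta> \<le> 1" using D by (simp add: contraction_compressor_def)
  have "(norm (v + D (u - v)))\<^sup>2 \<le> (1 - \<delta> / 4) * (norm v)\<^sup>2 + (6 / \<delta> - 7 / 2) * (norm u)\<^sup>2"
    by (rule contraction_compressor_step[OF D])
  also have "\<dots> \<le> (1 - \<delta> / 4) * c + \<delta> / 4 * c"
    using v u \<open>\<delta> \<le> 1\<close> by (intro add_mono mult_left_mono) auto
  finally show ?thesis by (simp add: algebra_simps)
qed

lemma det_contraction_compressorD:
  "det_contraction_compressor M \<delta> C \<Longrightarrow> s \<in> space M \<Longrightarrow> contraction_compressor \<delta> (C s)"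
  unfolding det_contraction_compressor_def by auto

section \<open>The BL2 iteration\<close>

text \<open>The matrix \<open>[H\<^sub>i]\<^sub>s + l\<^sub>i I\<close> of the algorithm, where \<open>Hz\<close> stands for the Hessian
  of \<open>f\<^sub>i\<close> at \<open>z\<^sub>i\<close>.\<close>

definition bl2_curvature ::
    "('n::finite \<Rightarrow> 'n \<Rightarrow> real^'n^'n) \<Rightarrow> real^'n^'n \<Rightarrow> real^'n^'n \<Rightarrow> real^'n^'n"
  where "bl2_curvature Bi Li Hz = symm (Hmat Bi Li) + norm (symm (Hmat Bi Li) - Hz) *\<^sub>R mat 1"

lemma bl2_xnext_eq_averaged_newton:
  "bl2_xnext n g Hs B z w L =
     matrix_inv ((1 / real n) *\<^sub>R (\<Sum>i<n. bl2_curvature (B i) (L i) (Hs i (z i)))) *v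
       ((1 / real n) *\<^sub>R (\<Sum>i<n. bl2_curvature (B i) (L i) (Hs i (z i)) *v w i - g i (w i)))"
  by (simp add: bl2_xnext_def bl2_curvature_def symm_scaleR_sum sum.distrib scaleR_add_right
      flip: scaleR_sum_left)

locale bl2_problem =
  fixes n :: nat
    and f :: "nat \<Rightarrow> real^'n::finite \<Rightarrow> real"
    and g :: "nat \<Rightarrow> real^'n \<Rightarrow> real^'n"
    and Hs :: "nat \<Rightarrow> real^'n \<Rightarrow> real^'n^'n"
    and B :: "nat \<Rightarrow> 'n \<Rightarrow> 'n \<Rightarrow> real^'n^'n"
    and mu H H1 R :: real
    and xs :: "real^'n"
  assumes n_pos: "n \<ge> 1"
    and mu_pos: "mu > 0"
    and grad: "\<And>i x. i < n \<Longrightarrow> (f i has_derivative (\<lambda>h. g i x \<bullet> h)) (at x)"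
    and hess: "\<And>i x. i < n \<Longrightarrow> (g i has_derivative (\<lambda>h. Hs i x *v h)) (at x)"
    and sconv: "\<And>i. i < n \<Longrightarrow> strongly_convex mu (f i)"
    and xs_min: "\<And>x. (1 / real n) * (\<Sum>i<n. f i xs) \<le> (1 / real n) * (\<Sum>i<n. f i x)"
    and basis: "\<And>i. i < n \<Longrightarrow> is_basis_mat (B i)"
    and lipH: "\<And>i x y. i < n \<Longrightarrow> onorm (\<lambda>v. (Hs i x - Hs i y) *v v) \<le> H * norm (x - y)"
    and lipH1: "\<And>i x y. i < n \<Longrightarrow> norm (Hs i x - Hs i y) \<le> H1 * norm (x - y)"
    and boundR: "\<And>i j l. i < n \<Longrightarrow> norm (B i j l) \<le> R"
begin

abbreviation Lstar :: "nat \<Rightarrow> real^'n^'n"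
  where "Lstar i \<equiv> hcoef (B i) (Hs i xs)"

lemma R_pos: "0 < R"
  using n_pos basis_norm_bound_pos[OF basis boundR, of 0] by simp

lemma norm_Hmat_le_NB_sqrt:
  assumes "i < n"
  shows "norm (Hmat (B i) c) \<le> sqrt (NB n B) * R * norm c"
proof (rule power2_le_imp_le)
  show "(norm (Hmat (B i) c))\<^sup>2 \<le> (sqrt (NB n B) * R * norm c)\<^sup>2"
    using norm_Hmat_le_NB[OF boundR assms] NB_ge_1[of n B] by (simp add: power_mult_distrib)
  show "0 \<le> sqrt (NB n B) * R * norm c"
    using R_pos NB_ge_1[of n B] by simp
qed

lemma curvature_coercive:
  assumes i: "i < n"
  shows "mu * (norm v)\<^sup>2 \<le> v \<bullet> (bl2_curvature (B i) Li (Hs i z) *v v)"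
proof -
  let ?E = "symm (Hmat (B i) Li) - Hs i z"
  have "mu * (norm v)\<^sup>2 \<le> v \<bullet> (Hs i z *v v)"
    by (rule strongly_convex_hessian_ge[OF grad hess lipH sconv, OF i i i i])
  moreover have "- (norm ?E * (norm v)\<^sup>2) \<le> v \<bullet> (?E *v v)" by (rule inner_matrix_vector_ge)
  ultimately show ?thesis
    by (simp add: bl2_curvature_def matrix_vector_mult_add_rdistrib matrix_vector_mult_diff_rdistrib
        scaleR_matrix_vector_assoc[symmetric] inner_add_right inner_diff_right power2_norm_eq_inner)
qed

lemma curvature_linearization_error:
  assumes i: "i < n"
  shows "norm (bl2_curvature (B i) Li (Hs i z) *v (w - xs) - (g i w - g i xs))
    \<le> (H * norm (w - xs) + 2 * sqrt (NB n B) * R * norm (Li - Lstar i) + H1 * norm (z - xs)) * norm (w - xs)"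
proof -
  let ?S = "Hs i xs" and ?y = "w - xs" and ?K = "sqrt (NB n B) * R"
  let ?E = "symm (Hmat (B i) Li) - ?S" and ?l = "norm (symm (Hmat (B i) Li) - Hs i z)"
  have E: "norm ?E \<le> ?K * norm (Li - Lstar i)"
  proof -
    have "?E = symm (Hmat (B i) (Li - Lstar i))"
      using symm_eq_self[OF hessian_symmetric[OF grad hess lipH, OF i i i]]
      by (simp add: symm_diff Hmat_hcoef[OF basis[OF i]] flip: Hmat_diff)
    then show ?thesis using norm_symm_le norm_Hmat_le_NB_sqrt[OF i] order_trans by metis
  qed
  have l: "?l \<le> ?K * norm (Li - Lstar i) + H1 * norm (z - xs)"
    using norm_triangle_ineq[of ?E "?S - Hs i z"] lipH1[OF i, of xs z] E
    by (simp add: norm_minus_commute)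
  have "bl2_curvature (B i) Li (Hs i z) *v ?y - (g i w - g i xs)
      = (?E *v ?y + ?l *\<^sub>R ?y) - (g i w - g i xs - ?S *v ?y)"
    by (simp add: bl2_curvature_def matrix_vector_mult_add_rdistrib matrix_vector_mult_diff_rdistrib
        scaleR_matrix_vector_assoc[symmetric] algebra_simps)
  also have "norm \<dots> \<le> norm (?E *v ?y) + ?l * norm ?y + norm (g i w - g i xs - ?S *v ?y)"
    using norm_triangle_ineq4[of "?E *v ?y + ?l *\<^sub>R ?y" "g i w - g i xs - ?S *v ?y"]
      norm_triangle_ineq[of "?E *v ?y" "?l *\<^sub>R ?y"]
    by simp
  also have "\<dots> \<le> ?K * norm (Li - Lstar i) * norm ?y
      + (?K * norm (Li - Lstar i) + H1 * norm (z - xs)) * norm ?y + H * (norm ?y)\<^sup>2"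
    using norm_matrix_vector_mult_le[of ?E ?y] mult_right_mono[OF E norm_ge_zero[of ?y]]
      mult_right_mono[OF l norm_ge_zero[of ?y]] gradient_taylor_le[OF hess lipH, OF i i, of w xs]
    by linarith
  finally show ?thesis by (simp add: algebra_simps power2_eq_square)
qed

lemma xnext_error_le:
  "mu * norm (bl2_xnext n g Hs B z w L - xs) \<le> (1 / real n) *
     (\<Sum>i<n. (H * norm (w i - xs) + 2 * sqrt (NB n B) * R * norm (L i - Lstar i) + H1 * norm (z i - xs))
            * norm (w i - xs))"
proof -
  have critical: "(\<Sum>i<n. g i xs) = 0"
    by (rule sum_gradients_eq_0_at_minimizer[OF n_pos grad xs_min])
  have "mu * norm (bl2_xnext n g Hs B z w L - xs) \<le> (1 / real n) * (\<Sum>i<n.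
      norm (bl2_curvature (B i) (L i) (Hs i (z i)) *v (w i - xs) - (g i (w i) - g i xs)))"
    unfolding bl2_xnext_eq_averaged_newton
    by (rule averaged_newton_step_error[where G = g, OF n_pos mu_pos _ critical])
      (rule curvature_coercive)
  also have "\<dots> \<le> (1 / real n) * (\<Sum>i<n. (H * norm (w i - xs) + 2 * sqrt (NB n B) * R * norm (L i - Lstar i)
      + H1 * norm (z i - xs)) * norm (w i - xs))"
    by (intro mult_left_mono sum_mono curvature_linearization_error) auto
  finally show ?thesis .
qed

lemma linearization_error_term_sq_le:
  assumes w: "(norm (w - xs))\<^sup>2 \<le> \<rho>" and z: "(norm (z - xs))\<^sup>2 \<le> \<rho>"
    and L: "(norm (Li - Lstar i))\<^sup>2 \<le> \<sigma>"
  shows "((H * norm (w - xs) + 2 * sqrt (NB n B) * R * norm (Li - Lstar i) + H1 * norm (z - xs))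
          * norm (w - xs))\<^sup>2
         \<le> (3 * (H\<^sup>2 + H1\<^sup>2) * \<rho> + 12 * NB n B * R\<^sup>2 * \<sigma>) * \<rho>"
proof -
  let ?a = "H * norm (w - xs)" and ?b = "2 * sqrt (NB n B) * R * norm (Li - Lstar i)"
    and ?c = "H1 * norm (z - xs)"
  have "?a\<^sup>2 \<le> H\<^sup>2 * \<rho>"
    using mult_left_mono[OF w, of "H\<^sup>2"] by (simp add: power_mult_distrib)
  moreover have "?b\<^sup>2 \<le> 4 * (NB n B * R\<^sup>2) * \<sigma>"
    using mult_left_mono[OF L, of "4 * (NB n B * R\<^sup>2)"] NB_ge_1[of n B]
    by (simp add: power_mult_distrib)
  moreover have "?c\<^sup>2 \<le> H1\<^sup>2 * \<rho>"
    using mult_left_mono[OF z, of "H1\<^sup>2"] by (simp add: power_mult_distrib)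
  ultimately have "3 * (?a\<^sup>2 + ?b\<^sup>2 + ?c\<^sup>2) \<le> 3 * (H\<^sup>2 * \<rho> + 4 * (NB n B * R\<^sup>2) * \<sigma> + H1\<^sup>2 * \<rho>)"
    by simp
  also have "\<dots> = 3 * (H\<^sup>2 + H1\<^sup>2) * \<rho> + 12 * NB n B * R\<^sup>2 * \<sigma>" by (simp add: algebra_simps)
  finally have sq_le: "(?a + ?b + ?c)\<^sup>2 \<le> 3 * (H\<^sup>2 + H1\<^sup>2) * \<rho> + 12 * NB n B * R\<^sup>2 * \<sigma>"
    using square_sum3_le[of ?a ?b ?c] by linarith
  then show ?thesis
    unfolding power_mult_distrib using w order_trans[OF zero_le_power2 sq_le]
    by (intro mult_mono) auto
qed

lemma xnext_error_sq_le:
  assumes w: "\<And>i. i < n \<Longrightarrow> (norm (w i - xs))\<^sup>2 \<le> \<rho>"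
    and z: "\<And>i. i < n \<Longrightarrow> (norm (z i - xs))\<^sup>2 \<le> \<rho>"
    and L: "\<And>i. i < n \<Longrightarrow> (norm (L i - Lstar i))\<^sup>2 \<le> \<sigma>"
    and \<theta>: "3 * (H\<^sup>2 + H1\<^sup>2) * \<rho> + 12 * NB n B * R\<^sup>2 * \<sigma> \<le> \<theta> * mu\<^sup>2"
  shows "(norm (bl2_xnext n g Hs B z w L - xs))\<^sup>2 \<le> \<theta> * \<rho>"
proof -
  define G where "G = 3 * (H\<^sup>2 + H1\<^sup>2) * \<rho> + 12 * NB n B * R\<^sup>2 * \<sigma>"
  let ?e = "norm (bl2_xnext n g Hs B z w L - xs)"
  have "mu * ?e \<le> (1 / real n) *
     (\<Sum>i<n. (H * norm (w i - xs) + 2 * sqrt (NB n B) * R * norm (L i - Lstar i) + H1 * norm (z i - xs))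
            * norm (w i - xs))"
    by (rule xnext_error_le)
  also have "\<dots> \<le> (1 / real n) * (\<Sum>i<n. sqrt (G * \<rho>))"
    unfolding G_def using linearization_error_term_sq_le[OF w z L]
    by (intro mult_left_mono sum_mono real_le_rsqrt) auto
  also have "\<dots> = sqrt (G * \<rho>)" using n_pos by simp
  finally have le_sqrt: "mu * ?e \<le> sqrt (G * \<rho>)" .
  moreover have "0 \<le> mu * ?e" using mu_pos by simp
  ultimately have "0 \<le> G * \<rho>" by (meson order_trans real_sqrt_ge_0_iff)
  then have "(mu * ?e)\<^sup>2 \<le> G * \<rho>"
    using le_sqrt mu_pos by (metis mult_nonneg_nonneg norm_ge_zero less_imp_le power_mono real_sqrt_pow2)
  also have "G * \<rho> \<le> (\<theta> * \<rho>) * mu\<^sup>2"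
  proof -
    have "0 \<le> \<rho>" using n_pos w[of 0] order_trans[OF zero_le_power2] by simp
    then show ?thesis using mult_right_mono[OF \<theta>] by (simp add: G_def mult_ac)
  qed
  finally show ?thesis
    using mu_pos by (simp add: power_mult_distrib mult.commute)
qed

end

locale bl2_run = bl2_problem n f g Hs B mu H H1 R xs
  for n f and g :: "nat \<Rightarrow> real^'n::finite \<Rightarrow> real^'n" and Hs B mu H H1 R xs +
  fixes alpha eta :: real
    and S :: "nat \<Rightarrow> nat set"
    and xi :: "nat \<Rightarrow> nat \<Rightarrow> bool"
    and Q :: "nat \<Rightarrow> nat \<Rightarrow> real^'n \<Rightarrow> real^'n"
    and C :: "nat \<Rightarrow> nat \<Rightarrow> real^'n^'n \<Rightarrow> real^'n^'n"
    and x0 :: "real^'n"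
    and L0 :: "nat \<Rightarrow> real^'n^'n"
begin

abbreviation "state \<equiv> bl2_state n g Hs B alpha eta S xi Q C x0 L0"

abbreviation "zz \<equiv> bl2_z n g Hs B alpha eta S xi Q C x0 L0"

abbreviation "LL \<equiv> bl2_L n g Hs B alpha eta S xi Q C x0 L0"

abbreviation "xx \<equiv> bl2_x n g Hs B alpha eta S xi Q C x0 L0"

abbreviation "ww k \<equiv> fst (snd (state k))"

lemma
  shows xx_Suc: "xx (Suc k) = bl2_xnext n g Hs B (zz k) (ww k) (LL k)"
    and zz_Suc: "zz (Suc k) i = (if i \<in> S k then zz k i + eta *\<^sub>R Q i k (xx (Suc k) - zz k i) else zz k i)"
    and LL_Suc: "LL (Suc k) i =
      (if i \<in> S k then LL k i + alpha *\<^sub>R C i k (hcoef (B i) (Hs i (zz (Suc k) i)) - LL k i) else LL k i)"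
    and ww_Suc: "ww (Suc k) i = (if i \<in> S k \<and> xi k i then zz (Suc k) i else ww k i)"
  by (cases "state k"; simp add: bl2_z_def bl2_L_def Let_def)+

lemma ww_eq_past_zz: "\<exists>t\<le>k. ww k i = zz t i"
proof (induction k)
  case 0
  show ?case by (simp add: bl2_z_def)
next
  case (Suc k)
  then show ?case
    by (cases "i \<in> S k \<and> xi k i") (auto simp del: bl2_state.simps simp: ww_Suc le_Suc_eq)
qed

lemma xx_Suc_sq_le:
  assumes zz: "\<And>t i. t \<le> k \<Longrightarrow> i < n \<Longrightarrow> (norm (zz t i - xs))\<^sup>2 \<le> \<rho>"
    and LL: "\<And>i. i < n \<Longrightarrow> (norm (LL k i - Lstar i))\<^sup>2 \<le> \<sigma>"
    and \<theta>: "3 * (H\<^sup>2 + H1\<^sup>2) * \<rho> + 12 * NB n B * R\<^sup>2 * \<sigma> \<le> \<theta> * mu\<^sup>2"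
  shows "(norm (xx (Suc k) - xs))\<^sup>2 \<le> \<theta> * \<rho>"
  unfolding xx_Suc
proof (rule xnext_error_sq_le[OF _ _ _ \<theta>])
  fix i
  assume i: "i < n"
  show "(norm (ww k i - xs))\<^sup>2 \<le> \<rho>" using ww_eq_past_zz[of k i] zz i by auto
  show "(norm (zz k i - xs))\<^sup>2 \<le> \<rho>" using zz i by simp
  show "(norm (LL k i - Lstar i))\<^sup>2 \<le> \<sigma>" using LL i by simp
qed

lemma zz_Suc_sq_le:
  assumes "eta = 1" and "contraction_compressor \<delta> (Q i k)" and "(norm (zz k i - xs))\<^sup>2 \<le> c"
    and "(6 / \<delta> - 7 / 2) * (norm (xx (Suc k) - xs))\<^sup>2 \<le> \<delta> / 4 * c"
  shows "(norm (zz (Suc k) i - xs))\<^sup>2 \<le> c"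
proof (cases "i \<in> S k")
  case True
  then have "zz (Suc k) i - xs = (zz k i - xs) + Q i k ((xx (Suc k) - xs) - (zz k i - xs))"
    using zz_Suc[of k i] assms(1) by simp
  then show ?thesis using contraction_compressor_step_le[OF assms(2-4)] by metis
next
  case False
  then show ?thesis using assms(3) by (simp add: zz_Suc)
qed

lemma LL_Suc_sq_le:
  assumes "alpha = 1" and "contraction_compressor \<delta> (C i k)" and "(norm (LL k i - Lstar i))\<^sup>2 \<le> c"
    and "(6 / \<delta> - 7 / 2) * (norm (hcoef (B i) (Hs i (zz (Suc k) i)) - Lstar i))\<^sup>2 \<le> \<delta> / 4 * c"
  shows "(norm (LL (Suc k) i - Lstar i))\<^sup>2 \<le> c"
proof (cases "i \<in> S k")
  case True
  then have "LL (Suc k) i - Lstar i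
      = (LL k i - Lstar i) + C i k ((hcoef (B i) (Hs i (zz (Suc k) i)) - Lstar i) - (LL k i - Lstar i))"
    using LL_Suc[of k i] assms(1) by simp
  then show ?thesis using contraction_compressor_step_le[OF assms(2-4)] by metis
next
  case False
  then show ?thesis using assms(3) by (simp add: LL_Suc)
qed

lemma zz_sq_le_of_hull:
  assumes hull: "\<And>j. zz t i $ j \<in> convex hull ((\<lambda>t'. xx t' $ j) ` {..t})"
    and xx: "\<And>t'. t' \<le> t \<Longrightarrow> (norm (xx t' - xs))\<^sup>2 \<le> c" and "0 \<le> c"
  shows "(norm (zz t i - xs))\<^sup>2 \<le> real CARD('n) * c"
proof -
  have "(norm (zz t i - xs))\<^sup>2 \<le> real CARD('n) * (sqrt c)\<^sup>2"
    using hull xx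
    by (intro norm_sq_le_of_components_in_hull[where T = "{..t}"]) (auto intro: real_le_rsqrt)
  with \<open>0 \<le> c\<close> show ?thesis by simp
qed

lemma LL_sq_le_of_hull:
  assumes lipM2: "\<And>x y. maxabs (hcoef (B i) (Hs i x) - hcoef (B i) (Hs i y)) \<le> M2 * norm (x - y)"
    and hull: "\<And>j l. LL k i $ j $ l \<in> convex hull ((\<lambda>t. hcoef (B i) (Hs i (zz t i)) $ j $ l) ` {..k})"
    and zz: "\<And>t. t \<le> k \<Longrightarrow> (norm (zz t i - xs))\<^sup>2 \<le> \<rho>" and "0 \<le> \<rho>"
  shows "(norm (LL k i - Lstar i))\<^sup>2 \<le> real CARD('n) ^ 2 * M2\<^sup>2 * \<rho>"
proof -
  have "maxabs (hcoef (B i) (Hs i (zz t i)) - Lstar i) \<le> \<bar>M2\<bar> * sqrt \<rho>" if "t \<le> k" for t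
  proof -
    have "norm (zz t i - xs) \<le> sqrt \<rho>" using zz[OF that] by (rule real_le_rsqrt)
    then have "M2 * norm (zz t i - xs) \<le> \<bar>M2\<bar> * sqrt \<rho>"
      by (meson abs_ge_self abs_ge_zero mult_left_mono mult_right_mono norm_ge_zero order_trans)
    then show ?thesis using lipM2[of "zz t i" xs] by linarith
  qed
  then have "(norm (LL k i - Lstar i))\<^sup>2 \<le> real CARD('n) * real CARD('n) * (\<bar>M2\<bar> * sqrt \<rho>)\<^sup>2"
    using hull by (intro norm_sq_le_of_entries_in_hull[where T = "{..k}"]) auto
  with \<open>0 \<le> \<rho>\<close> show ?thesis
    by (simp add: power_mult_distrib power2_eq_square[of "real CARD('n)"] mult.assoc)
qed

lemma hull_invariants_bound_iterates:
  fixes M2 c :: real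
  defines "d \<equiv> real CARD('n)"
  assumes lipM2: "\<And>i x y. i < n \<Longrightarrow>
              maxabs (hcoef (B i) (Hs i x) - hcoef (B i) (Hs i y)) \<le> M2 * norm (x - y)"
    and z_hull: "\<forall>i<n. \<forall>j. \<forall>k. zz k i $ j \<in> convex hull ((\<lambda>t. xx t $ j) ` {..k})"
    and L_hull: "\<forall>i<n. \<forall>j l. \<forall>k. LL k i $ j $ l \<in>
                  convex hull ((\<lambda>t. hcoef (B i) (Hs i (zz t i)) $ j $ l) ` {..k})"
    and x0: "(norm (x0 - xs))\<^sup>2 \<le> c"
    and c_H: "c \<le> mu\<^sup>2 / (d\<^sup>2 * (6 * H\<^sup>2 + 24 * H1\<^sup>2))"
    and c_M2: "c \<le> mu\<^sup>2 / (96 * d ^ 4 * NB n B * R\<^sup>2 * M2\<^sup>2)"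
  shows "\<forall>i<n. \<forall>k. (norm (zz k i - xs))\<^sup>2 \<le> d * c \<and>
           (1 / real n) * (\<Sum>i'<n. (norm (LL k i' - Lstar i'))\<^sup>2) \<le> mu\<^sup>2 / (96 * d * NB n B * R\<^sup>2)"
proof -
  define \<sigma> where "\<sigma> = mu\<^sup>2 / (96 * d * NB n B * R\<^sup>2)"
  have d1: "1 \<le> d" unfolding d_def using finite_UNIV_card_ge_0[where 'a='n] by simp
  have c0: "0 \<le> c" using x0 order_trans zero_le_power2 by blast
  have NB1: "1 \<le> NB n B" by (rule NB_ge_1)
  have M2_budget: "d\<^sup>2 * M2\<^sup>2 * (d * c) \<le> \<sigma>"
  proof -
    have "c * (96 * d ^ 4 * NB n B * R\<^sup>2 * M2\<^sup>2) \<le> mu\<^sup>2"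
      using c_M2 d1 NB1 by (intro mult_le_of_le_divide) auto
    then show ?thesis
      using d1 NB1 R_pos by (simp add: \<sigma>_def pos_le_divide_eq power2_eq_square power4_eq_xxxx mult_ac)
  qed
  have H_budget: "3 * (H\<^sup>2 + H1\<^sup>2) * (d * c) + 12 * NB n B * R\<^sup>2 * \<sigma> \<le> (1 / d) * mu\<^sup>2"
  proof -
    have "c * (d\<^sup>2 * (6 * H\<^sup>2 + 24 * H1\<^sup>2)) \<le> mu\<^sup>2"
      using c_H by (intro mult_le_of_le_divide) auto
    moreover have "6 * (H\<^sup>2 + H1\<^sup>2) * (d\<^sup>2 * c) \<le> (6 * H\<^sup>2 + 24 * H1\<^sup>2) * (d\<^sup>2 * c)"
      using c0 by (intro mult_right_mono) auto
    ultimately have "3 * (H\<^sup>2 + H1\<^sup>2) * (d * c) * (2 * d) \<le> mu\<^sup>2"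
      by (simp add: power2_eq_square mult_ac)
    then have "3 * (H\<^sup>2 + H1\<^sup>2) * (d * c) \<le> (1 / 2) * (1 / d) * mu\<^sup>2"
      using d1 by (simp add: pos_le_divide_eq)
    moreover have "12 * NB n B * R\<^sup>2 * \<sigma> = (1 / 8) * (1 / d) * mu\<^sup>2"
      using d1 NB1 R_pos by (simp add: \<sigma>_def field_simps)
    moreover have "0 \<le> (1 / d) * mu\<^sup>2" using d1 by simp
    ultimately show ?thesis by linarith
  qed
  have zz_le: "(norm (zz t i - xs))\<^sup>2 \<le> d * c"
    if "\<forall>t'\<le>t. (norm (xx t' - xs))\<^sup>2 \<le> c" and "i < n" for t i
    unfolding d_def using that z_hull c0 by (intro zz_sq_le_of_hull) auto
  have LL_le: "(norm (LL k i - Lstar i))\<^sup>2 \<le> \<sigma>"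
    if "\<forall>t\<le>k. (norm (zz t i - xs))\<^sup>2 \<le> d * c" and i: "i < n" for k i
    using LL_sq_le_of_hull[OF lipM2[OF i], of k "d * c"] that L_hull M2_budget c0 d1
    by (auto simp: d_def)
  have xx_le: "\<forall>t\<le>k. (norm (xx t - xs))\<^sup>2 \<le> c" for k
  proof (induction k)
    case 0
    then show ?case using x0 by simp
  next
    case (Suc k)
    then have "(norm (xx (Suc k) - xs))\<^sup>2 \<le> (1 / d) * (d * c)"
      using zz_le LL_le by (intro xx_Suc_sq_le[OF _ _ H_budget]) auto
    then show ?case using Suc.IH d1 by (auto simp: le_Suc_eq)
  qed
  show ?thesis
  proof (intro allI impI conjI)
    fix i k
    assume i: "i < n"
    show "(norm (zz k i - xs))\<^sup>2 \<le> d * c" using zz_le xx_le i by blast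
    have "(1 / real n) * (\<Sum>i'<n. (norm (LL k i' - Lstar i'))\<^sup>2) \<le> (1 / real n) * (\<Sum>i'<n. \<sigma>)"
      using LL_le zz_le xx_le by (intro mult_left_mono sum_mono) auto
    then show "(1 / real n) * (\<Sum>i'<n. (norm (LL k i' - Lstar i'))\<^sup>2) \<le> mu\<^sup>2 / (96 * d * NB n B * R\<^sup>2)"
      using n_pos by (simp add: \<sigma>_def)
  qed
qed

lemma contractive_compressors_bound_iterates:
  fixes M1 \<delta>M \<delta> c :: real
  defines "AM \<equiv> \<delta>M / 4" and "BM \<equiv> 6 / \<delta>M - 7 / 2" and "A \<equiv> \<delta> / 4" and "BC \<equiv> 6 / \<delta> - 7 / 2"
  defines "cL \<equiv> AM * mu\<^sup>2 / (96 * NB n B * R\<^sup>2 * BM)"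
  assumes lipM1: "\<And>i x y. i < n \<Longrightarrow> norm (hcoef (B i) (Hs i x) - hcoef (B i) (Hs i y)) \<le> M1 * norm (x - y)"
    and Q_contr: "\<And>i k. i < n \<Longrightarrow> contraction_compressor \<delta>M (Q i k)" and eta: "eta = 1"
    and C_contr: "\<And>i k. i < n \<Longrightarrow> contraction_compressor \<delta> (C i k)" and alpha: "alpha = 1"
    and zz0: "\<And>i. i < n \<Longrightarrow> (norm (zz 0 i - xs))\<^sup>2 \<le> c"
    and LL0: "\<And>i. i < n \<Longrightarrow> (norm (LL 0 i - Lstar i))\<^sup>2 \<le> cL"
    and c_H: "c \<le> AM * mu\<^sup>2 / (BM * (6 * H\<^sup>2 + 24 * H1\<^sup>2))"
    and c_M1: "c \<le> A * AM * mu\<^sup>2 / (96 * NB n B * R\<^sup>2 * BM * BC * M1\<^sup>2)"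
  shows "\<forall>i<n. \<forall>k. (norm (zz k i - xs))\<^sup>2 \<le> c \<and> (norm (LL k i - Lstar i))\<^sup>2 \<le> cL"
proof -
  have n0: "0 < n" using n_pos by simp
  have \<delta>M: "0 < \<delta>M" "\<delta>M \<le> 1" using Q_contr[OF n0] by (auto simp: contraction_compressor_def)
  have \<delta>: "0 < \<delta>" "\<delta> \<le> 1" using C_contr[OF n0] by (auto simp: contraction_compressor_def)
  have BM: "0 < BM" unfolding BM_def using \<delta>M by (simp add: field_simps)
  have BC: "0 < BC" unfolding BC_def using \<delta> by (simp add: field_simps)
  have NB1: "1 \<le> NB n B" by (rule NB_ge_1)
  have c0: "0 \<le> c" using zz0[OF n0] order_trans zero_le_power2 by blast
  have cL_eq: "cL * (96 * NB n B * R\<^sup>2 * BM) = AM * mu\<^sup>2"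
    using NB1 R_pos BM by (simp add: cL_def)
  have H_budget: "3 * (H\<^sup>2 + H1\<^sup>2) * c + 12 * NB n B * R\<^sup>2 * cL \<le> (AM / BM) * mu\<^sup>2"
  proof -
    have "c * (BM * (6 * H\<^sup>2 + 24 * H1\<^sup>2)) \<le> AM * mu\<^sup>2"
      using c_H BM \<delta>M by (intro mult_le_of_le_divide) (auto simp: AM_def)
    moreover have "6 * (H\<^sup>2 + H1\<^sup>2) * (c * BM) \<le> (6 * H\<^sup>2 + 24 * H1\<^sup>2) * (c * BM)"
      using c0 BM by (intro mult_right_mono) auto
    ultimately have "3 * (H\<^sup>2 + H1\<^sup>2) * c * (2 * BM) \<le> AM * mu\<^sup>2"
      by (simp add: mult_ac)
    then have "3 * (H\<^sup>2 + H1\<^sup>2) * c \<le> (1 / 2) * (AM / BM) * mu\<^sup>2"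
      using BM by (simp add: pos_le_divide_eq)
    moreover have "12 * NB n B * R\<^sup>2 * cL = (1 / 8) * (AM / BM) * mu\<^sup>2"
      using cL_eq BM by (simp add: field_simps)
    moreover have "0 \<le> (AM / BM) * mu\<^sup>2" using \<delta>M BM by (simp add: AM_def)
    ultimately show ?thesis by linarith
  qed
  have M1_budget: "BC * (M1\<^sup>2 * c) \<le> A * cL"
  proof -
    have "c * (96 * NB n B * R\<^sup>2 * BM * BC * M1\<^sup>2) \<le> A * AM * mu\<^sup>2"
      using c_M1 BM BC NB1 \<delta> \<delta>M by (intro mult_le_of_le_divide) (auto simp: A_def AM_def)
    then have "BC * (M1\<^sup>2 * c) * (96 * NB n B * R\<^sup>2 * BM) \<le> (A * cL) * (96 * NB n B * R\<^sup>2 * BM)"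
      using cL_eq by (simp add: mult_ac)
    then show ?thesis using NB1 R_pos BM by (simp add: mult_le_cancel_right_pos)
  qed
  have "\<forall>t\<le>k. \<forall>i<n. (norm (zz t i - xs))\<^sup>2 \<le> c \<and> (norm (LL t i - Lstar i))\<^sup>2 \<le> cL" for k
  proof (induction k)
    case 0
    then show ?case using zz0 LL0 by simp
  next
    case (Suc k)
    have "(norm (xx (Suc k) - xs))\<^sup>2 \<le> (AM / BM) * c"
      using Suc.IH by (intro xx_Suc_sq_le[OF _ _ H_budget]) auto
    then have "BM * (norm (xx (Suc k) - xs))\<^sup>2 \<le> BM * ((AM / BM) * c)"
      using BM by (intro mult_left_mono) auto
    also have "\<dots> = AM * c" using BM by simp
    finally have xx_step: "BM * (norm (xx (Suc k) - xs))\<^sup>2 \<le> AM * c" .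
    have zz_le: "(norm (zz (Suc k) i - xs))\<^sup>2 \<le> c" if i: "i < n" for i
      by (rule zz_Suc_sq_le[OF eta Q_contr[OF i] _ xx_step[unfolded AM_def BM_def]])
        (use Suc.IH i in simp)
    have LL_le: "(norm (LL (Suc k) i - Lstar i))\<^sup>2 \<le> cL" if i: "i < n" for i
    proof (rule LL_Suc_sq_le[OF alpha C_contr[OF i]])
      show "(norm (LL k i - Lstar i))\<^sup>2 \<le> cL" using Suc.IH i by simp
      have "(norm (hcoef (B i) (Hs i (zz (Suc k) i)) - Lstar i))\<^sup>2 \<le> (M1 * norm (zz (Suc k) i - xs))\<^sup>2"
        using lipM1[OF i, of "zz (Suc k) i" xs] by (intro power_mono) auto
      also have "\<dots> \<le> M1\<^sup>2 * c" using zz_le[OF i] by (simp add: power_mult_distrib mult_left_mono)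
      finally have "BC * (norm (hcoef (B i) (Hs i (zz (Suc k) i)) - Lstar i))\<^sup>2 \<le> A * cL"
        using M1_budget BC by (meson mult_left_mono less_imp_le order_trans)
      then show "(6 / \<delta> - 7 / 2) * (norm (hcoef (B i) (Hs i (zz (Suc k) i)) - Lstar i))\<^sup>2 \<le> \<delta> / 4 * cL"
        unfolding A_def BC_def .
    qed
    show ?case using Suc.IH zz_le LL_le by (auto simp: le_Suc_eq)
  qed
  then show ?thesis by blast
qed

end

theorem theorem4p14:
  fixes n :: nat
    and f :: "nat \<Rightarrow> real^'n::finite \<Rightarrow> real"
    and g :: "nat \<Rightarrow> real^'n \<Rightarrow> real^'n"
    and Hs :: "nat \<Rightarrow> real^'n \<Rightarrow> real^'n^'n"
    and B :: "nat \<Rightarrow> 'n \<Rightarrow> 'n \<Rightarrow> real^'n^'n"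
    and mu H H1 M1 M2 R alpha eta p tau :: real
    and xs x0 :: "real^'n"
    and L0 :: "nat \<Rightarrow> real^'n^'n"
    and M :: "'w measure"
    and S :: "nat \<Rightarrow> 'w \<Rightarrow> nat set"
    and xi :: "nat \<Rightarrow> nat \<Rightarrow> 'w \<Rightarrow> bool"
    and Q :: "nat \<Rightarrow> nat \<Rightarrow> 'w \<Rightarrow> real^'n \<Rightarrow> real^'n"
    and C :: "nat \<Rightarrow> nat \<Rightarrow> 'w \<Rightarrow> real^'n^'n \<Rightarrow> real^'n^'n"
  assumes n_pos: "n \<ge> 1"
    and mu_pos: "mu > 0"
    and grad: "\<And>i x. i < n \<Longrightarrow> (f i has_derivative (\<lambda>h. g i x \<bullet> h)) (at x)"
    and hess: "\<And>i x. i < n \<Longrightarrow> (g i has_derivative (\<lambda>h. Hs i x *v h)) (at x)"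
    and sconv: "\<And>i. i < n \<Longrightarrow> strongly_convex mu (f i)"
    and xs_min: "\<And>x. (1 / real n) * (\<Sum>i<n. f i xs) \<le> (1 / real n) * (\<Sum>i<n. f i x)"
    and basis: "\<And>i. i < n \<Longrightarrow> is_basis_mat (B i)"
    and lipH: "\<And>i x y. i < n \<Longrightarrow> onorm (\<lambda>v. (Hs i x - Hs i y) *v v) \<le> H * norm (x - y)"
    and lipH1: "\<And>i x y. i < n \<Longrightarrow> norm (Hs i x - Hs i y) \<le> H1 * norm (x - y)"
    and lipM1: "\<And>i x y. i < n \<Longrightarrow>
                  norm (hcoef (B i) (Hs i x) - hcoef (B i) (Hs i y)) \<le> M1 * norm (x - y)"
    and lipM2: "\<And>i x y. i < n \<Longrightarrow>
                  maxabs (hcoef (B i) (Hs i x) - hcoef (B i) (Hs i y)) \<le> M2 * norm (x - y)"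
    and boundR: "\<And>i j l. i < n \<Longrightarrow> norm (B i j l) \<le> R"
    and alpha_pos: "alpha > 0" and eta_pos: "eta > 0"
    and p_range: "0 < p" "p \<le> 1"
    and tau_range: "0 < tau" "tau \<le> real n"
    and M_prob: "prob_space M"
    and S_sub: "\<And>k s. s \<in> space M \<Longrightarrow> S k s \<subseteq> {..<n}"
    and S_meas: "\<And>k i. {s \<in> space M. i \<in> S k s} \<in> sets M"
    and S_prob: "\<And>k i. i < n \<Longrightarrow> measure M {s \<in> space M. i \<in> S k s} = tau / real n"
    and xi_meas: "\<And>k i. {s \<in> space M. xi k i s} \<in> sets M"
    and xi_prob: "\<And>k i. i < n \<Longrightarrow> measure M {s \<in> space M. xi k i s} = p"
  defines "zz \<equiv> \<lambda>s. bl2_z n g Hs B alpha eta (\<lambda>k. S k s) (\<lambda>k i. xi k i s) (\<lambda>i k. Q i k s) (\<lambda>i k. C i k s) x0 L0"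
    and "LL \<equiv> \<lambda>s. bl2_L n g Hs B alpha eta (\<lambda>k. S k s) (\<lambda>k i. xi k i s) (\<lambda>i k. Q i k s) (\<lambda>i k. C i k s) x0 L0"
    and "xx \<equiv> \<lambda>s. bl2_x n g Hs B alpha eta (\<lambda>k. S k s) (\<lambda>k i. xi k i s) (\<lambda>i k. Q i k s) (\<lambda>i k. C i k s) x0 L0"
    and "d \<equiv> real CARD('n)"
    and "Lstar \<equiv> \<lambda>i. hcoef (B i) (Hs i xs)"
  shows
    "(\<forall>omM. \<forall>s\<in>space M.
       ((\<forall>i<n. \<forall>k. unbiased_compressor M omM (Q i k)) \<and> eta \<le> 1 / (omM + 1) \<and>
        (\<forall>i<n. \<forall>j. \<forall>k. zz s k i $ j \<in> convex hull ((\<lambda>t. xx s t $ j) ` {..k})) \<and>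
        (\<forall>i<n. \<forall>j l. \<forall>k. LL s k i $ j $ l \<in>
            convex hull ((\<lambda>t. hcoef (B i) (Hs i (zz s t i)) $ j $ l) ` {..k})) \<and>
        (norm (x0 - xs))\<^sup>2 \<le>
          min (mu\<^sup>2 / (d\<^sup>2 * (6 * H\<^sup>2 + 24 * H1\<^sup>2)))
              (mu\<^sup>2 / (96 * d ^ 4 * NB n B * R\<^sup>2 * M2\<^sup>2)))
       \<longrightarrow>
       (\<forall>i<n. \<forall>k.
          (norm (zz s k i - xs))\<^sup>2 \<le>
             d * min (mu\<^sup>2 / (d\<^sup>2 * (6 * H\<^sup>2 + 24 * H1\<^sup>2)))
                     (mu\<^sup>2 / (96 * d ^ 4 * NB n B * R\<^sup>2 * M2\<^sup>2)) \<and>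
          (1 / real n) * (\<Sum>i'<n. (norm (LL s k i' - Lstar i'))\<^sup>2)
             \<le> mu\<^sup>2 / (96 * d * NB n B * R\<^sup>2)))
     \<and>
     (\<forall>deltaM delta. \<forall>s\<in>space M.
       ((\<forall>i<n. \<forall>k. det_contraction_compressor M deltaM (Q i k)) \<and> eta = 1 \<and>
        (\<forall>i<n. \<forall>k. det_contraction_compressor M delta (C i k)) \<and> alpha = 1 \<and>
        (\<forall>i<n. (norm (zz s 0 i - xs))\<^sup>2 \<le>
           min ((deltaM / 4) * mu\<^sup>2 / ((6 / deltaM - 7 / 2) * (6 * H\<^sup>2 + 24 * H1\<^sup>2)))
               ((delta / 4) * (deltaM / 4) * mu\<^sup>2 /
                  (96 * NB n B * R\<^sup>2 * (6 / deltaM - 7 / 2) * (6 / delta - 7 / 2) * M1\<^sup>2))) \<and>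
        (\<forall>i<n. (norm (LL s 0 i - Lstar i))\<^sup>2 \<le>
           (deltaM / 4) * mu\<^sup>2 / (96 * NB n B * R\<^sup>2 * (6 / deltaM - 7 / 2))))
       \<longrightarrow>
       (\<forall>i<n. \<forall>k.
          (norm (zz s k i - xs))\<^sup>2 \<le>
           min ((deltaM / 4) * mu\<^sup>2 / ((6 / deltaM - 7 / 2) * (6 * H\<^sup>2 + 24 * H1\<^sup>2)))
               ((delta / 4) * (deltaM / 4) * mu\<^sup>2 /
                  (96 * NB n B * R\<^sup>2 * (6 / deltaM - 7 / 2) * (6 / delta - 7 / 2) * M1\<^sup>2)) \<and>
          (norm (LL s k i - Lstar i))\<^sup>2 \<le>
           (deltaM / 4) * mu\<^sup>2 / (96 * NB n B * R\<^sup>2 * (6 / deltaM - 7 / 2))))"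
proof -
  have P: "bl2_run n f g Hs B mu H H1 R xs"
    by unfold_locales (fact n_pos mu_pos grad hess sconv xs_min basis lipH lipH1 boundR)+
  \<comment> \<open>Both parts hold realization by realization.\<close>
  show ?thesis
    unfolding zz_def LL_def xx_def d_def Lstar_def
  proof ((rule conjI; intro allI; intro ballI impI), goal_cases unbiased contractive)
    case (unbiased omM s)
    then show ?case
      by (elim conjE, intro bl2_run.hull_invariants_bound_iterates[OF P lipM2]) simp_all
  next
    case (contractive deltaM delta s)
    then show ?case
      by (elim conjE, intro bl2_run.contractive_compressors_bound_iterates[OF P lipM1,
            where \<delta>M = deltaM and \<delta> = delta])
        (auto intro: det_contraction_compressorD[OF _ contractive(1)])
  qed
qed

end
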